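(* Let $\mathcal T$ be an $m\times n$ PEPS with nonzero contraction, and let $\mathcal C$ be an $m\times n$ PEPS with the same contraction which is columnwise canonical towards the last column and whose last column is canonical towards node $(m,n)$, with all horizontal bond dimensions and all vertical bond dimensions in column $n$ of $\mathcal C$ at most $D$. Then, up to $O(\epsilon_1^2+\epsilon_2^2)$, $$\sup_{(\Xi,\xi)}\mathscr E_r(\mathcal C,\Xi,\xi)\le\frac{\epsilon_1\big(1+(n-1)D^{m/2}\big)+\epsilon_2\big(1+(m-1)\sqrt D\big)}{\epsilon_1(n-1)+\epsilon_2m}\,\sup_{(\Delta,\delta)}\mathscr E_r(\mathcal T,\Delta,\delta),$$ where the suprema run over $(\epsilon_1,\epsilon_2)$-perturbations of $\mathcal C$ and of $\mathcal T$ respectively.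
   Context: PEPS: an $m\times n$ PEPS is a tensor network on the $m\times n$ grid with node tensors $\mathbf T^{(i,j)}$ ($i$ = row, $j$ = column); each node has a physical (uncontracted) leg, horizontal bonds join $(i,j)$ and $(i,j+1)$, vertical bonds join $(i,j)$ and $(i+1,j)$; the contraction $\mathbf T$ sums over all bond indices the product of node entries. The column tensor $\mathbf T^{(\cdot,j)}$ is the contraction of the nodes of column $j$. Columnwise canonical towards the last column: for each $j\le n-1$, the matricization of the column tensor of column $j$ with rows indexed by its physical legs and its horizontal bonds to column $j-1$, and columns indexed by its horizontal bonds to column $j+1$, is an isometry. Last column canonical towards $(m,n)$: for each $i\le m-1$, the matricization of node $(i,n)$ with rows indexed by its physical leg, its horizontal bond to column $n-1$ and its vertical bond to node $(i-1,n)$ (if any), and columns indexed by its vertical bond to node $(i+1,n)$, is an isometry. Perturbation model: $(\Delta,\delta)$ consists of tensors $\Delta^{(j)}$ ($j\le n-1$) of the shape of $\mathbf T^{(\cdot,j)}$ and $\delta^{(i)}$ ($i\le m$) of the shape of $\mathbf T^{(i,n)}$; the perturbed PEPS has column tensors $\mathbf T^{(\cdot,j)}+\Delta^{(j)}$ for $j\le n-1$ and nodes $\mathbf T^{(i,n)}+\delta^{(i)}$ in column $n$; $\hat{\mathbf T}$ is its contraction and $\mathscr E_r(\mathcal T,\Delta,\delta)=\|\hat{\mathbf T}-\mathbf T\|_F/\|\mathbf T\|_F$. It is an $(\epsilon_1,\epsilon_2)$-perturbation if $\|\Delta^{(j)}\|_F\le\epsilon_1\|\mathbf T^{(\cdot,j)}\|_F$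 and $\|\delta^{(i)}\|_F\le\epsilon_2\|\mathbf T^{(i,n)}\|_F$ for all $j\le n-1$, $i\le m$. $\|\cdot\|_F$ Frobenius norm. *)

theory Defs
  imports Complex_Main "HOL-Library.FuncSet"
begin

text \<open>Conventions: rows i and columns j are 0-indexed (i < m, j < n).
Every node has five legs (p, l, r, u, d): physical, left/right horizontal,
up/down vertical.  A leg that does not exist (boundary) is represented by a
dummy leg of dimension 1 (index 0).  hdim T i j is the dimension of the
horizontal bond between (i,j) and (i,j+1); vdim T i j that of the vertical
bond between (i,j) and (i+1,j).\<close>

record peps =
  phys :: "nat \<Rightarrow> nat \<Rightarrow> nat"
  hdim :: "nat \<Rightarrow> nat \<Rightarrow> nat"
  vdim :: "nat \<Rightarrow> nat \<Rightarrow> nat"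
  node :: "nat \<Rightarrow> nat \<Rightarrow> nat \<Rightarrow> nat \<Rightarrow> nat \<Rightarrow> nat \<Rightarrow> nat \<Rightarrow> real"

definition ldim :: "peps \<Rightarrow> nat \<Rightarrow> nat \<Rightarrow> nat" where
  "ldim T i j = (if j = 0 then 1 else hdim T i (j - 1))"
definition rdim :: "nat \<Rightarrow> peps \<Rightarrow> nat \<Rightarrow> nat \<Rightarrow> nat" where
  "rdim n T i j = (if j + 1 < n then hdim T i j else 1)"
definition udim :: "peps \<Rightarrow> nat \<Rightarrow> nat \<Rightarrow> nat" where
  "udim T i j = (if i = 0 then 1 else vdim T (i - 1) j)"
definition ddim :: "nat \<Rightarrow> peps \<Rightarrow> nat \<Rightarrow> nat \<Rightarrow> nat" where
  "ddim m T i j = (if i + 1 < m then vdim T i j else 1)"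

definition nshape_norm :: "nat \<Rightarrow> nat \<Rightarrow> peps \<Rightarrow> nat \<Rightarrow> nat \<Rightarrow>
    (nat \<Rightarrow> nat \<Rightarrow> nat \<Rightarrow> nat \<Rightarrow> nat \<Rightarrow> real) \<Rightarrow> real" where
  "nshape_norm m n T i j t = sqrt (\<Sum>p<phys T i j. \<Sum>l<ldim T i j. \<Sum>r<rdim n T i j.
      \<Sum>u<udim T i j. \<Sum>d<ddim m T i j. (t p l r u d)\<^sup>2)"

text \<open>Column tensors: indexed by physical index vector, left-bond vector and
right-bond vector (functions on rows {..<m}).\<close>
definition cu :: "(nat \<Rightarrow> nat) \<Rightarrow> nat \<Rightarrow> nat" where
  "cu v i = (if i = 0 then 0 else v (i - 1))"
definition cd :: "nat \<Rightarrow> (nat \<Rightarrow> nat) \<Rightarrow> nat \<Rightarrow> nat" where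
  "cd m v i = (if i + 1 < m then v i else 0)"

definition vbonds_col :: "nat \<Rightarrow> peps \<Rightarrow> nat \<Rightarrow> (nat \<Rightarrow> nat) set" where
  "vbonds_col m T j = Pi\<^sub>E {..<m - 1} (\<lambda>i. {..<vdim T i j})"

definition col_tensor :: "nat \<Rightarrow> nat \<Rightarrow> peps \<Rightarrow> nat \<Rightarrow>
    (nat \<Rightarrow> nat) \<Rightarrow> (nat \<Rightarrow> nat) \<Rightarrow> (nat \<Rightarrow> nat) \<Rightarrow> real" where
  "col_tensor m n T j x l r = (\<Sum>v\<in>vbonds_col m T j.
      \<Prod>i<m. node T i j (x i) (l i) (r i) (cu v i) (cd m v i))"

definition physC :: "nat \<Rightarrow> peps \<Rightarrow> nat \<Rightarrow> (nat \<Rightarrow> nat) set" where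
  "physC m T j = Pi\<^sub>E {..<m} (\<lambda>i. {..<phys T i j})"
definition leftC :: "nat \<Rightarrow> peps \<Rightarrow> nat \<Rightarrow> (nat \<Rightarrow> nat) set" where
  "leftC m T j = Pi\<^sub>E {..<m} (\<lambda>i. {..<ldim T i j})"
definition rightC :: "nat \<Rightarrow> nat \<Rightarrow> peps \<Rightarrow> nat \<Rightarrow> (nat \<Rightarrow> nat) set" where
  "rightC m n T j = Pi\<^sub>E {..<m} (\<lambda>i. {..<rdim n T i j})"

definition cshape_norm :: "nat \<Rightarrow> nat \<Rightarrow> peps \<Rightarrow> nat \<Rightarrow>
    ((nat \<Rightarrow> nat) \<Rightarrow> (nat \<Rightarrow> nat) \<Rightarrow> (nat \<Rightarrow> nat) \<Rightarrow> real) \<Rightarrow> real" where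
  "cshape_norm m n T j t = sqrt (\<Sum>x\<in>physC m T j. \<Sum>l\<in>leftC m T j. \<Sum>r\<in>rightC m n T j.
      (t x l r)\<^sup>2)"

definition hbonds :: "nat \<Rightarrow> nat \<Rightarrow> peps \<Rightarrow> (nat \<times> nat \<Rightarrow> nat) set" where
  "hbonds m n T = Pi\<^sub>E {(i, j). i < m \<and> j + 1 < n} (\<lambda>(i, j). {..<hdim T i j})"
definition vbonds :: "nat \<Rightarrow> nat \<Rightarrow> peps \<Rightarrow> (nat \<times> nat \<Rightarrow> nat) set" where
  "vbonds m n T = Pi\<^sub>E {(i, j). i + 1 < m \<and> j < n} (\<lambda>(i, j). {..<vdim T i j})"

definition lidx :: "(nat \<times> nat \<Rightarrow> nat) \<Rightarrow> nat \<Rightarrow> nat \<Rightarrow> nat" where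
  "lidx h i j = (if j = 0 then 0 else h (i, j - 1))"
definition ridx :: "nat \<Rightarrow> (nat \<times> nat \<Rightarrow> nat) \<Rightarrow> nat \<Rightarrow> nat \<Rightarrow> nat" where
  "ridx n h i j = (if j + 1 < n then h (i, j) else 0)"
definition uidx :: "(nat \<times> nat \<Rightarrow> nat) \<Rightarrow> nat \<Rightarrow> nat \<Rightarrow> nat" where
  "uidx v i j = (if i = 0 then 0 else v (i - 1, j))"
definition didx :: "nat \<Rightarrow> (nat \<times> nat \<Rightarrow> nat) \<Rightarrow> nat \<Rightarrow> nat \<Rightarrow> nat" where
  "didx m v i j = (if i + 1 < m then v (i, j) else 0)"

definition contraction :: "nat \<Rightarrow> nat \<Rightarrow> peps \<Rightarrow> (nat \<times> nat \<Rightarrow> nat) \<Rightarrow> real" where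
  "contraction m n T x = (\<Sum>h\<in>hbonds m n T. \<Sum>v\<in>vbonds m n T.
      \<Prod>i<m. \<Prod>j<n. node T i j (x (i, j)) (lidx h i j) (ridx n h i j) (uidx v i j) (didx m v i j))"

definition physIdx :: "nat \<Rightarrow> nat \<Rightarrow> peps \<Rightarrow> (nat \<times> nat \<Rightarrow> nat) set" where
  "physIdx m n T = Pi\<^sub>E ({..<m} \<times> {..<n}) (\<lambda>(i, j). {..<phys T i j})"

definition tensor_norm :: "nat \<Rightarrow> nat \<Rightarrow> peps \<Rightarrow> ((nat \<times> nat \<Rightarrow> nat) \<Rightarrow> real) \<Rightarrow> real" where
  "tensor_norm m n T f = sqrt (\<Sum>x\<in>physIdx m n T. (f x)\<^sup>2)"

definition xcol :: "nat \<Rightarrow> (nat \<times> nat \<Rightarrow> nat) \<Rightarrow> nat \<Rightarrow> nat \<Rightarrow> nat" where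
  "xcol m x j = (\<lambda>i\<in>{..<m}. x (i, j))"
definition lcol :: "nat \<Rightarrow> (nat \<times> nat \<Rightarrow> nat) \<Rightarrow> nat \<Rightarrow> nat \<Rightarrow> nat" where
  "lcol m h j = (\<lambda>i\<in>{..<m}. lidx h i j)"
definition rcol :: "nat \<Rightarrow> nat \<Rightarrow> (nat \<times> nat \<Rightarrow> nat) \<Rightarrow> nat \<Rightarrow> nat \<Rightarrow> nat" where
  "rcol m n h j = (\<lambda>i\<in>{..<m}. ridx n h i j)"

definition last_col :: "nat \<Rightarrow> nat \<Rightarrow> peps \<Rightarrow>
    (nat \<Rightarrow> nat \<Rightarrow> nat \<Rightarrow> nat \<Rightarrow> nat \<Rightarrow> nat \<Rightarrow> real) \<Rightarrow> (nat \<Rightarrow> nat) \<Rightarrow> (nat \<Rightarrow> nat) \<Rightarrow> real" where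
  "last_col m n T \<delta> xc l = (\<Sum>v\<in>vbonds_col m T (n - 1).
      \<Prod>i<m. node T i (n - 1) (xc i) (l i) 0 (cu v i) (cd m v i)
             + \<delta> i (xc i) (l i) 0 (cu v i) (cd m v i))"

definition pert_contraction :: "nat \<Rightarrow> nat \<Rightarrow> peps \<Rightarrow>
    (nat \<Rightarrow> (nat \<Rightarrow> nat) \<Rightarrow> (nat \<Rightarrow> nat) \<Rightarrow> (nat \<Rightarrow> nat) \<Rightarrow> real) \<Rightarrow>
    (nat \<Rightarrow> nat \<Rightarrow> nat \<Rightarrow> nat \<Rightarrow> nat \<Rightarrow> nat \<Rightarrow> real) \<Rightarrow> (nat \<times> nat \<Rightarrow> nat) \<Rightarrow> real" where
  "pert_contraction m n T \<Delta> \<delta> x = (\<Sum>h\<in>hbonds m n T.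
      (\<Prod>j<n - 1. col_tensor m n T j (xcol m x j) (lcol m h j) (rcol m n h j)
                   + \<Delta> j (xcol m x j) (lcol m h j) (rcol m n h j))
      * last_col m n T \<delta> (xcol m x (n - 1)) (lcol m h (n - 1)))"

definition rel_err :: "nat \<Rightarrow> nat \<Rightarrow> peps \<Rightarrow>
    (nat \<Rightarrow> (nat \<Rightarrow> nat) \<Rightarrow> (nat \<Rightarrow> nat) \<Rightarrow> (nat \<Rightarrow> nat) \<Rightarrow> real) \<Rightarrow>
    (nat \<Rightarrow> nat \<Rightarrow> nat \<Rightarrow> nat \<Rightarrow> nat \<Rightarrow> nat \<Rightarrow> real) \<Rightarrow> real" where
  "rel_err m n T \<Delta> \<delta> =
     tensor_norm m n T (\<lambda>x. pert_contraction m n T \<Delta> \<delta> x - contraction m n T x)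
     / tensor_norm m n T (contraction m n T)"

definition is_pert :: "nat \<Rightarrow> nat \<Rightarrow> peps \<Rightarrow> real \<Rightarrow> real \<Rightarrow>
    (nat \<Rightarrow> (nat \<Rightarrow> nat) \<Rightarrow> (nat \<Rightarrow> nat) \<Rightarrow> (nat \<Rightarrow> nat) \<Rightarrow> real) \<Rightarrow>
    (nat \<Rightarrow> nat \<Rightarrow> nat \<Rightarrow> nat \<Rightarrow> nat \<Rightarrow> nat \<Rightarrow> real) \<Rightarrow> bool" where
  "is_pert m n T \<epsilon>1 \<epsilon>2 \<Delta> \<delta> \<longleftrightarrow>
     (\<forall>j<n - 1. cshape_norm m n T j (\<Delta> j) \<le> \<epsilon>1 * cshape_norm m n T j (col_tensor m n T j)) \<and>
     (\<forall>i<m. nshape_norm m n T i (n - 1) (\<delta> i) \<le> \<epsilon>2 * nshape_norm m n T i (n - 1) (node T i (n - 1)))"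

definition sup_err :: "nat \<Rightarrow> nat \<Rightarrow> peps \<Rightarrow> real \<Rightarrow> real \<Rightarrow> real" where
  "sup_err m n T \<epsilon>1 \<epsilon>2 = Sup {rel_err m n T \<Delta> \<delta> | \<Delta> \<delta>. is_pert m n T \<epsilon>1 \<epsilon>2 \<Delta> \<delta>}"

definition col_canonical :: "nat \<Rightarrow> nat \<Rightarrow> peps \<Rightarrow> bool" where
  "col_canonical m n T \<longleftrightarrow> (\<forall>j<n - 1. \<forall>r\<in>rightC m n T j. \<forall>r'\<in>rightC m n T j.
     (\<Sum>x\<in>physC m T j. \<Sum>l\<in>leftC m T j. col_tensor m n T j x l r * col_tensor m n T j x l r')
       = (if r = r' then 1 else 0))"

definition last_canonical :: "nat \<Rightarrow> nat \<Rightarrow> peps \<Rightarrow> bool" where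
  "last_canonical m n T \<longleftrightarrow> (\<forall>i<m - 1. \<forall>d<vdim T i (n - 1). \<forall>d'<vdim T i (n - 1).
     (\<Sum>p<phys T i (n - 1). \<Sum>l<ldim T i (n - 1). \<Sum>u<udim T i (n - 1).
        node T i (n - 1) p l 0 u d * node T i (n - 1) p l 0 u d')
       = (if d = d' then 1 else 0))"

end

theory Submission
  imports Defs "HOL-Analysis.L2_Norm" "HOL-Analysis.Convex"
begin

text \<open>The contraction of the canonical PEPS \<open>C\<close> is a matrix product over its columns whose
  first \<open>n - 1\<close> factors are isometries, and its last column is a matrix product over its nodes
  whose first \<open>m - 1\<close> factors are isometries.  To first order, the perturbation error is the sum
  of the contractions in which a single column tensor \<open>\<Xi>\<^sub>j\<close> or a single node \<open>\<xi>\<^sub>i\<close> of the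
  last column replaces the original one.  Contracting away the isometries to its left and
  applying Cauchy--Schwarz to the part on its right bounds such a term by \<open>\<parallel>\<Xi>\<^sub>j\<parallel> \<parallel>C\<parallel>\<close>, by
  \<open>\<parallel>\<xi>\<^sub>i\<parallel> \<parallel>C\<parallel>\<close> for \<open>i < m\<close>, and by \<open>\<parallel>\<xi>\<^sub>m\<parallel>\<close> for the corner node.  The canonical
  conditions give \<open>\<parallel>C(\<cdot>, j)\<parallel>\<^sup>2\<close> = number of right bonds \<open>\<le> D\<^sup>m\<close>,
  \<open>\<parallel>C(i, n)\<parallel>\<^sup>2\<close> = lower bond dimension \<open>\<le> D\<close> and \<open>\<parallel>C(m, n)\<parallel> = \<parallel>C\<parallel>\<close>, so up to
  second order the relative error for \<open>C\<close> is at most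
  \<open>\<epsilon>\<^sub>1 (n - 1) D\<^sup>m\<^sup>/\<^sup>2 + \<epsilon>\<^sub>2 ((m - 1) \<surd>D + 1)\<close>.  For \<open>T\<close>, scaling every column tensor by
  \<open>1 + \<epsilon>\<^sub>1\<close> and every last-column node by \<open>1 + \<epsilon>\<^sub>2\<close> is an admissible perturbation with
  relative error \<open>(1 + \<epsilon>\<^sub>1)\<^sup>n\<^sup>-\<^sup>1 (1 + \<epsilon>\<^sub>2)\<^sup>m - 1 \<ge> \<epsilon>\<^sub>1 (n - 1) + \<epsilon>\<^sub>2 m\<close>
  (Bernoulli), which bounds the supremum for \<open>T\<close> from below.\<close>

lemma sum_PiE_insert:
  assumes "k \<notin> S"
  shows "(\<Sum>g\<in>Pi\<^sub>E (insert k S) P. f g) = (\<Sum>a\<in>P k. \<Sum>g\<in>Pi\<^sub>E S P. f (g(k := a)))"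
proof -
  have "(\<Sum>g\<in>Pi\<^sub>E (insert k S) P. f g) = (\<Sum>(a,g)\<in>P k \<times> Pi\<^sub>E S P. f (g(k := a)))"
    using assms
    by (intro sum.reindex_bij_witness[of _ "\<lambda>(y,g). g(k := y)" "\<lambda>g. (g k, g(k := undefined))"])
       (auto simp: PiE_def extensional_def)
  then show ?thesis
    by (simp add: sum.cartesian_product)
qed

lemma sum_PiE_lessThan_Suc:
  "(\<Sum>g\<in>Pi\<^sub>E {..<Suc k} P. f g) = (\<Sum>a\<in>P k. \<Sum>g\<in>Pi\<^sub>E {..<k} P. f (g(k := a)))"
  using sum_PiE_insert[where k=k and S="{..<k}"] by (simp add: lessThan_Suc)

lemma sum_PiE_lessThan_1:
  "(\<Sum>g\<in>Pi\<^sub>E {..<Suc 0} P. f (g 0)) = (\<Sum>a\<in>P 0. f a)"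
  by (subst sum_PiE_lessThan_Suc) simp

definition shift :: "(nat \<Rightarrow> 'a) \<Rightarrow> nat \<Rightarrow> nat \<Rightarrow> 'a" where
  "shift f t j = f (t + j)"

definition merge :: "nat \<Rightarrow> (nat \<Rightarrow> 'a) \<Rightarrow> (nat \<Rightarrow> 'a) \<Rightarrow> nat \<Rightarrow> 'a" where
  "merge t y w i = (if i < t then y i else w (i - t))"

lemma shift_merge [simp]: "shift (merge t y w) t = w"
  by (simp add: shift_def merge_def fun_eq_iff)

lemma merge_in_PiE:
  assumes "y \<in> Pi\<^sub>E {..<t} P" and "w \<in> Pi\<^sub>E {..<r} (shift P t)"
  shows "merge t y w \<in> Pi\<^sub>E {..<t + r} P"
proof (rule PiE_I)
  fix i assume i: "i \<in> {..<t + r}"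
  show "merge t y w i \<in> P i"
  proof (cases "i < t")
    case False
    then have "w (i - t) \<in> P (t + (i - t))"
      using i PiE_mem[OF assms(2), of "i - t"] by (simp add: shift_def)
    then show ?thesis
      using False by (simp add: merge_def)
  qed (use assms(1) in \<open>auto simp: merge_def\<close>)
next
  fix i assume "i \<notin> {..<t + r}"
  then show "merge t y w i = undefined"
    using assms by (auto simp: merge_def PiE_def extensional_def)
qed

lemma merge_restrict:
  assumes "x \<in> Pi\<^sub>E {..<t + r} P"
  shows "merge t (restrict x {..<t}) (\<lambda>j\<in>{..<r}. x (t + j)) = x"
proof
  fix i
  show "merge t (restrict x {..<t}) (\<lambda>j\<in>{..<r}. x (t + j)) i = x i"
    using assms by (cases "i < t"; cases "i < t + r") (auto simp: merge_def PiE_def extensional_def)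
qed

lemma restrict_merge:
  assumes "y \<in> Pi\<^sub>E {..<t} P" and "w \<in> Pi\<^sub>E {..<r} Q"
  shows "restrict (merge t y w) {..<t} = y" and "(\<lambda>j\<in>{..<r}. merge t y w (t + j)) = w"
  using assms by (auto simp: merge_def PiE_def extensional_def fun_eq_iff)

lemma sum_PiE_lessThan_add:
  "(\<Sum>x\<in>Pi\<^sub>E {..<t + r} P. f x) =
   (\<Sum>y\<in>Pi\<^sub>E {..<t} P. \<Sum>w\<in>Pi\<^sub>E {..<r} (shift P t). f (merge t y w))"
proof -
  have "(\<Sum>x\<in>Pi\<^sub>E {..<t + r} P. f x)
      = (\<Sum>(y,w)\<in>Pi\<^sub>E {..<t} P \<times> Pi\<^sub>E {..<r} (shift P t). f (merge t y w))"
  proof (rule sum.reindex_bij_witness[of _ "\<lambda>(y,w). merge t y w"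
        "\<lambda>x. (restrict x {..<t}, \<lambda>j\<in>{..<r}. x (t + j))"])
    fix a assume "a \<in> Pi\<^sub>E {..<t} P \<times> Pi\<^sub>E {..<r} (shift P t)"
    then obtain y w where "a = (y, w)" "y \<in> Pi\<^sub>E {..<t} P" "w \<in> Pi\<^sub>E {..<r} (shift P t)"
      by blast
    then show "(case a of (y, w) \<Rightarrow> merge t y w) \<in> Pi\<^sub>E {..<t + r} P"
      and "(restrict (case a of (y, w) \<Rightarrow> merge t y w) {..<t},
            \<lambda>j\<in>{..<r}. (case a of (y, w) \<Rightarrow> merge t y w) (t + j)) = a"
      by (simp_all add: merge_in_PiE restrict_merge)
  qed (auto simp: merge_restrict shift_def PiE_iff)
  then show ?thesis
    by (simp add: sum.cartesian_product)
qed

lemma sum_swap3: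
  "(\<Sum>x\<in>X. \<Sum>a\<in>A. \<Sum>b\<in>B. f x a b) = (\<Sum>a\<in>A. \<Sum>b\<in>B. \<Sum>x\<in>X. (f x a b :: real))"
  by (subst sum.swap, rule sum.cong[OF refl], rule sum.swap)

section \<open>Matrix product chains\<close>

text \<open>A matrix product chain: factor \<open>F j p a b\<close> has physical index \<open>p \<in> P j\<close>, left bond
  \<open>a \<in> chain_bonds B z j\<close> and right bond \<open>b \<in> B j\<close>, where the left bond of factor 0 is the
  fixed boundary bond \<open>z\<close>.  \<open>chain F B z k x b\<close> contracts factors \<open>0, \<dots>, k - 1\<close> along
  their shared bonds, leaving the right bond \<open>b\<close> open.\<close>

definition chain_bonds :: "(nat \<Rightarrow> 'b set) \<Rightarrow> 'b \<Rightarrow> nat \<Rightarrow> 'b set" where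
  "chain_bonds B z j = (if j = 0 then {z} else B (j - 1))"

fun chain :: "(nat \<Rightarrow> 'p \<Rightarrow> 'b \<Rightarrow> 'b \<Rightarrow> real) \<Rightarrow> (nat \<Rightarrow> 'b set) \<Rightarrow> 'b \<Rightarrow> nat \<Rightarrow>
    (nat \<Rightarrow> 'p) \<Rightarrow> 'b \<Rightarrow> real" where
  "chain F B z 0 x b = (if b = z then 1 else 0)"
| "chain F B z (Suc k) x b = (\<Sum>a\<in>chain_bonds B z k. chain F B z k x a * F k (x k) a b)"

lemma chain_bonds_shift:
  "chain_bonds (shift B t) c r = (if r = 0 then {c} else B (t + r - 1))"
  by (simp add: chain_bonds_def shift_def)

lemma finite_chain_bonds: "(\<And>j. finite (B j)) \<Longrightarrow> finite (chain_bonds B z j)"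
  by (simp add: chain_bonds_def)

lemma chain_cong:
  assumes "\<And>j. j < k \<Longrightarrow> x j = x' j" and "\<And>j. j < k \<Longrightarrow> F j = F' j"
  shows "chain F B z k x b = chain F' B z k x' b"
  using assms by (induction k arbitrary: b) auto

lemma chain_1: "chain F B c (Suc 0) w d = F 0 (w 0) c d"
  by (simp add: chain_bonds_def)

lemma chain_merge: "chain F B z t (merge t y w) b = chain F B z t y b"
  by (rule chain_cong) (auto simp: merge_def)

lemma chain_explicit:
  "chain F B z (Suc k) x b = (\<Sum>bs\<in>Pi\<^sub>E {..<k} B.
      \<Prod>j<Suc k. F j (x j) (if j = 0 then z else bs (j - 1)) (if j < k then bs j else b))"
proof (induction k arbitrary: b)
  case 0
  then show ?case by (simp add: chain_bonds_def)
next
  case (Suc k)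
  let ?term = "\<lambda>bs b k. \<Prod>j<Suc k. F j (x j) (if j = 0 then z else bs (j - 1)) (if j < k then bs j else b)"
  have step: "?term (bs(k := a)) b (Suc k) = ?term bs a k * F (Suc k) (x (Suc k)) a b" for bs a
  proof -
    have "(\<Prod>j<Suc k. F j (x j) (if j = 0 then z else (bs(k := a)) (j - 1))
            (if j < Suc k then (bs(k := a)) j else b)) = ?term bs a k"
      by (intro prod.cong refl) auto
    then show ?thesis by simp
  qed
  have "chain F B z (Suc (Suc k)) x b = (\<Sum>a\<in>B k. chain F B z (Suc k) x a * F (Suc k) (x (Suc k)) a b)"
    by (simp add: chain_bonds_def)
  also have "\<dots> = (\<Sum>a\<in>B k. \<Sum>bs\<in>Pi\<^sub>E {..<k} B. ?term bs a k * F (Suc k) (x (Suc k)) a b)"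
    by (simp only: Suc.IH sum_distrib_right)
  also have "\<dots> = (\<Sum>bs\<in>Pi\<^sub>E {..<Suc k} B. ?term bs b (Suc k))"
    by (subst sum_PiE_lessThan_Suc) (simp only: step)
  finally show ?case .
qed

lemma chain_split:
  assumes fin: "\<And>j. finite (B j)" and rb: "0 < r \<or> b \<in> chain_bonds B z t"
  shows "chain F B z (t + r) x b
       = (\<Sum>c\<in>chain_bonds B z t. chain F B z t x c * chain (shift F t) (shift B t) c r (shift x t) b)"
  using rb
proof (induction r arbitrary: b)
  case 0
  have "(\<Sum>c\<in>chain_bonds B z t. chain F B z t x c * chain (shift F t) (shift B t) c 0 (shift x t) b)
      = (\<Sum>c\<in>chain_bonds B z t. (if c = b then chain F B z t x c else 0))"
    by (intro sum.cong refl) auto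
  also have "\<dots> = chain F B z t x b"
    using 0 fin by (simp add: sum.delta' finite_chain_bonds)
  finally show ?case by simp
next
  case (Suc r)
  let ?R = "\<lambda>c r a. chain (shift F t) (shift B t) c r (shift x t) a"
  show ?case
  proof (cases "r = 0")
    case True
    then show ?thesis
      by (simp add: chain_bonds_def shift_def)
  next
    case False
    have IH: "chain F B z (t + r) x a = (\<Sum>c\<in>chain_bonds B z t. chain F B z t x c * ?R c r a)" for a
      using False by (intro Suc.IH) simp
    have bonds: "chain_bonds (shift B t) c r = chain_bonds B z (t + r)" for c
      using False by (simp add: chain_bonds_shift chain_bonds_def shift_def)
    have "chain F B z (t + Suc r) x b
        = (\<Sum>a\<in>chain_bonds B z (t + r). chain F B z (t + r) x a * F (t + r) (x (t + r)) a b)"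
      by simp
    also have "\<dots> = (\<Sum>c\<in>chain_bonds B z t. \<Sum>a\<in>chain_bonds B z (t + r).
                      chain F B z t x c * (?R c r a * F (t + r) (x (t + r)) a b))"
      by (simp only: IH sum_distrib_right sum.swap[of _ "chain_bonds B z (t + r)"] mult.assoc)
    also have "\<dots> = (\<Sum>c\<in>chain_bonds B z t. chain F B z t x c * ?R c (Suc r) b)"
      by (simp add: bonds sum_distrib_left shift_def)
    finally show ?thesis .
  qed
qed

lemma chain_Suc_first:
  assumes fin: "\<And>j. finite (B j)" and rb: "0 < r \<or> b \<in> B 0"
  shows "chain F B z (Suc r) x b
    = (\<Sum>d\<in>B 0. F 0 (x 0) z d * chain (shift F 1) (shift B 1) d r (shift x 1) b)"
proof -
  have "chain F B z (1 + r) x b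
      = (\<Sum>d\<in>chain_bonds B z 1. chain F B z 1 x d * chain (shift F 1) (shift B 1) d r (shift x 1) b)"
    using rb by (intro chain_split fin) (simp add: chain_bonds_def)
  then show ?thesis
    by (simp only: One_nat_def chain_1 plus_1_eq_Suc) (simp add: chain_bonds_def)
qed

definition left_isometric :: "(nat \<Rightarrow> 'p \<Rightarrow> 'b \<Rightarrow> 'b \<Rightarrow> real) \<Rightarrow> (nat \<Rightarrow> 'p set) \<Rightarrow>
    (nat \<Rightarrow> 'b set) \<Rightarrow> 'b \<Rightarrow> nat \<Rightarrow> bool" where
  "left_isometric F P B z j \<longleftrightarrow> (\<forall>b\<in>B j. \<forall>b'\<in>B j.
     (\<Sum>p\<in>P j. \<Sum>a\<in>chain_bonds B z j. F j p a b * F j p a b') = (if b = b' then 1 else 0))"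

lemma left_isometric_fun_upd: "j \<noteq> t \<Longrightarrow> left_isometric (F(t := D)) P B z j = left_isometric F P B z j"
  by (simp add: left_isometric_def)

lemma chain_orthonormal:
  assumes fin: "\<And>j. finite (B j)" and finP: "\<And>j. finite (P j)"
    and iso: "\<And>j. j < k \<Longrightarrow> left_isometric F P B z j"
    and b: "b \<in> chain_bonds B z k" and b': "b' \<in> chain_bonds B z k"
  shows "(\<Sum>x\<in>Pi\<^sub>E {..<k} P. chain F B z k x b * chain F B z k x b') = (if b = b' then 1 else 0)"
  using iso b b'
proof (induction k arbitrary: b b')
  case 0
  then show ?case by (simp add: chain_bonds_def)
next
  case (Suc k)
  let ?A = "chain_bonds B z k"
  let ?G = "\<lambda>a a'. \<Sum>x\<in>Pi\<^sub>E {..<k} P. chain F B z k x a * chain F B z k x a'"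
  have upd: "chain F B z k (x(k := p)) a = chain F B z k x a" for x p a
    by (rule chain_cong) auto
  have IH: "?G a a' = (if a = a' then 1 else 0)" if "a \<in> ?A" "a' \<in> ?A" for a a'
    using Suc.prems(1) that by (intro Suc.IH) auto
  have "(\<Sum>x\<in>Pi\<^sub>E {..<Suc k} P. chain F B z (Suc k) x b * chain F B z (Suc k) x b')
      = (\<Sum>p\<in>P k. \<Sum>x\<in>Pi\<^sub>E {..<k} P. \<Sum>a\<in>?A. \<Sum>a'\<in>?A.
           (chain F B z k x a * F k p a b) * (chain F B z k x a' * F k p a' b'))"
    by (subst sum_PiE_lessThan_Suc) (simp only: chain.simps upd fun_upd_same sum_product)
  also have "\<dots> = (\<Sum>p\<in>P k. \<Sum>x\<in>Pi\<^sub>E {..<k} P. \<Sum>a\<in>?A. \<Sum>a'\<in>?A.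
           (chain F B z k x a * chain F B z k x a') * (F k p a b * F k p a' b'))"
    by (intro sum.cong refl) (simp only: mult_ac)
  also have "\<dots> = (\<Sum>p\<in>P k. \<Sum>a\<in>?A. \<Sum>a'\<in>?A. ?G a a' * (F k p a b * F k p a' b'))"
    by (subst sum_swap3) (simp only: sum_distrib_right)
  also have "\<dots> = (\<Sum>p\<in>P k. \<Sum>a\<in>?A. \<Sum>a'\<in>?A. (if a' = a then F k p a b * F k p a' b' else 0))"
    by (intro sum.cong refl) (simp add: IH)
  also have "\<dots> = (\<Sum>p\<in>P k. \<Sum>a\<in>?A. F k p a b * F k p a b')"
    by (simp add: sum.delta finite_chain_bonds fin)
  also have "\<dots> = (if b = b' then 1 else 0)"
    using Suc.prems by (simp add: left_isometric_def chain_bonds_def)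
  finally show ?case .
qed

lemma sum_sq_isometry:
  assumes "finite C"
    and "\<And>c c'. c \<in> C \<Longrightarrow> c' \<in> C \<Longrightarrow> (\<Sum>y\<in>Y. U y c * U y c') = (if c = c' then 1 else 0)"
  shows "(\<Sum>y\<in>Y. (\<Sum>c\<in>C. U y c * g c)\<^sup>2) = (\<Sum>c\<in>C. (g c :: real)\<^sup>2)"
proof -
  have "(\<Sum>y\<in>Y. (\<Sum>c\<in>C. U y c * g c)\<^sup>2)
      = (\<Sum>y\<in>Y. \<Sum>c\<in>C. \<Sum>c'\<in>C. (U y c * g c) * (U y c' * g c'))"
    by (simp only: power2_eq_square sum_product)
  also have "\<dots> = (\<Sum>c\<in>C. \<Sum>c'\<in>C. \<Sum>y\<in>Y. (U y c * U y c') * (g c * g c'))"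
    by (subst sum_swap3) (simp only: mult_ac)
  also have "\<dots> = (\<Sum>c\<in>C. \<Sum>c'\<in>C. (\<Sum>y\<in>Y. U y c * U y c') * (g c * g c'))"
    by (simp only: sum_distrib_right)
  also have "\<dots> = (\<Sum>c\<in>C. \<Sum>c'\<in>C. (if c' = c then g c * g c' else 0))"
    using assms(2) by (intro sum.cong refl) simp
  also have "\<dots> = (\<Sum>c\<in>C. (g c)\<^sup>2)"
    using assms(1) by (simp add: sum.delta power2_eq_square)
  finally show ?thesis .
qed

lemma chain_sq_norm_isometric_prefix:
  assumes fin: "\<And>j. finite (B j)" and finP: "\<And>j. finite (P j)"
    and iso: "\<And>j. j < s \<Longrightarrow> left_isometric F P B z j"
    and rb: "0 < r \<or> zend \<in> chain_bonds B z s"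
  shows "(\<Sum>x\<in>Pi\<^sub>E {..<s + r} P. (chain F B z (s + r) x zend)\<^sup>2)
       = (\<Sum>w\<in>Pi\<^sub>E {..<r} (shift P s). \<Sum>c\<in>chain_bonds B z s.
            (chain (shift F s) (shift B s) c r w zend)\<^sup>2)"
proof -
  let ?R = "\<lambda>w c. chain (shift F s) (shift B s) c r w zend"
  have "(\<Sum>x\<in>Pi\<^sub>E {..<s + r} P. (chain F B z (s + r) x zend)\<^sup>2)
      = (\<Sum>w\<in>Pi\<^sub>E {..<r} (shift P s). \<Sum>y\<in>Pi\<^sub>E {..<s} P.
           (\<Sum>c\<in>chain_bonds B z s. chain F B z s y c * ?R w c)\<^sup>2)"
    by (subst sum_PiE_lessThan_add, subst sum.swap)
       (simp only: chain_split[OF fin rb] chain_merge shift_merge)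
  also have "\<dots> = (\<Sum>w\<in>Pi\<^sub>E {..<r} (shift P s). \<Sum>c\<in>chain_bonds B z s. (?R w c)\<^sup>2)"
    by (intro sum.cong refl sum_sq_isometry finite_chain_bonds fin chain_orthonormal finP iso)
       auto
  finally show ?thesis .
qed

text \<open>Cauchy--Schwarz in the bond between factor \<open>t\<close> and the rest of the chain.\<close>

lemma chain_sq_norm_update_le:
  assumes fin: "\<And>j. finite (B j)" and finP: "\<And>j. finite (P j)"
    and iso: "\<And>j. j < t \<Longrightarrow> left_isometric F P B z j"
    and ze: "zend \<in> B (t + r)"
  shows "(\<Sum>x\<in>Pi\<^sub>E {..<t + Suc r} P. (chain (F(t := D)) B z (t + Suc r) x zend)\<^sup>2)
     \<le> (\<Sum>p\<in>P t. \<Sum>c\<in>chain_bonds B z t. \<Sum>d\<in>B t. (D p c d)\<^sup>2) *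
        (\<Sum>w\<in>Pi\<^sub>E {..<r} (shift P (Suc t)). \<Sum>d\<in>B t.
           (chain (shift F (Suc t)) (shift B (Suc t)) d r w zend)\<^sup>2)"
proof -
  let ?F = "F(t := D)"
  let ?R = "\<lambda>w d. chain (shift F (Suc t)) (shift B (Suc t)) d r w zend"
  let ?C = "chain_bonds B z t"
  have first_factor: "chain (shift ?F t) (shift B t) c (Suc r) w zend
      = (\<Sum>d\<in>B t. D (w 0) c d * ?R (shift w 1) d)" for c w
  proof -
    have "shift (shift ?F t) 1 = shift F (Suc t)" "shift (shift B t) 1 = shift B (Suc t)"
      by (auto simp: shift_def fun_eq_iff)
    moreover have "0 < r \<or> zend \<in> B t"
      using ze by (cases r) auto
    ultimately show ?thesis
      by (subst chain_Suc_first) (auto simp: fin shift_def)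
  qed
  have "(\<Sum>x\<in>Pi\<^sub>E {..<t + Suc r} P. (chain ?F B z (t + Suc r) x zend)\<^sup>2)
      = (\<Sum>w\<in>Pi\<^sub>E {..<Suc r} (shift P t). \<Sum>c\<in>?C. (chain (shift ?F t) (shift B t) c (Suc r) w zend)\<^sup>2)"
    by (rule chain_sq_norm_isometric_prefix) (auto simp: fin finP iso left_isometric_fun_upd)
  also have "\<dots> = (\<Sum>w\<in>Pi\<^sub>E {..<1 + r} (shift P t). \<Sum>c\<in>?C. (\<Sum>d\<in>B t. D (w 0) c d * ?R (shift w 1) d)\<^sup>2)"
    by (simp only: first_factor plus_1_eq_Suc)
  also have "\<dots> = (\<Sum>p\<in>P t. \<Sum>w\<in>Pi\<^sub>E {..<r} (shift P (Suc t)). \<Sum>c\<in>?C.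
                    (\<Sum>d\<in>B t. D p c d * ?R w d)\<^sup>2)"
  proof -
    have "shift (shift P t) 1 = shift P (Suc t)"
      by (auto simp: shift_def fun_eq_iff)
    then show ?thesis
      by (subst sum_PiE_lessThan_add)
         (simp add: merge_def, subst sum_PiE_lessThan_1, simp add: shift_def)
  qed
  also have "\<dots> \<le> (\<Sum>p\<in>P t. \<Sum>w\<in>Pi\<^sub>E {..<r} (shift P (Suc t)). \<Sum>c\<in>?C.
                    (\<Sum>d\<in>B t. (D p c d)\<^sup>2) * (\<Sum>d\<in>B t. (?R w d)\<^sup>2))"
    by (intro sum_mono Cauchy_Schwarz_ineq_sum)
  also have "\<dots> = (\<Sum>p\<in>P t. \<Sum>c\<in>?C. \<Sum>d\<in>B t. (D p c d)\<^sup>2) *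
        (\<Sum>w\<in>Pi\<^sub>E {..<r} (shift P (Suc t)). \<Sum>d\<in>B t. (?R w d)\<^sup>2)"
  proof -
    have "(\<Sum>w\<in>Pi\<^sub>E {..<r} (shift P (Suc t)). \<Sum>c\<in>?C.
            (\<Sum>d\<in>B t. (D p c d)\<^sup>2) * (\<Sum>d\<in>B t. (?R w d)\<^sup>2))
        = (\<Sum>c\<in>?C. (\<Sum>d\<in>B t. (D p c d)\<^sup>2) *
            (\<Sum>w\<in>Pi\<^sub>E {..<r} (shift P (Suc t)). \<Sum>d\<in>B t. (?R w d)\<^sup>2))" for p
      by (subst sum.swap) (simp only: sum_distrib_left)
    then show ?thesis
      by (simp only: sum_distrib_right)
  qed
  finally show ?thesis .
qed

section \<open>First-order expansion of products\<close>

definition first_order :: "'a set \<Rightarrow> ('a \<Rightarrow> real) \<Rightarrow> ('a \<Rightarrow> real) \<Rightarrow> real" where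
  "first_order J a d = (\<Sum>k\<in>J. d k * (\<Prod>j\<in>J - {k}. a j))"

lemma abs_prod_le:
  fixes a c :: "'a \<Rightarrow> real"
  assumes "\<And>j. j \<in> J \<Longrightarrow> \<bar>a j\<bar> \<le> c j"
  shows "\<bar>\<Prod>j\<in>J. a j\<bar> \<le> (\<Prod>j\<in>J. c j)"
  unfolding abs_prod by (intro prod_mono) (auto simp: assms)

lemma prod_fun_upd_remove:
  assumes "finite J" "k \<in> J"
  shows "(\<Prod>j\<in>J. (f(k := g)) j) = g * (\<Prod>j\<in>J - {k}. f j)"
proof -
  have "(\<Prod>j\<in>J - {k}. (f(k := g)) j) = (\<Prod>j\<in>J - {k}. f j)"
    by (intro prod.cong) auto
  then show ?thesis
    using prod.remove[OF assms, of "f(k := g)"] by simp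
qed

lemma first_order_eq_sum_fun_upd:
  "finite J \<Longrightarrow> first_order J a d = (\<Sum>k\<in>J. \<Prod>j\<in>J. (a(k := d k)) j)"
  unfolding first_order_def by (intro sum.cong refl prod_fun_upd_remove[symmetric]) auto

lemma first_order_insert:
  assumes "finite J" "i \<notin> J"
  shows "first_order (insert i J) a d = d i * (\<Prod>j\<in>J. a j) + a i * first_order J a d"
proof -
  have "(\<Prod>j\<in>insert i J - {k}. a j) = a i * (\<Prod>j\<in>J - {k}. a j)" if "k \<in> J" for k
  proof -
    have "insert i J - {k} = insert i (J - {k})"
      using assms that by auto
    then show ?thesis
      using assms by simp
  qed
  then show ?thesis
    using assms by (simp add: first_order_def insert_Diff_if sum_distrib_left mult.left_commute
        cong: sum.cong)
qed

lemma abs_first_order_le: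
  fixes a d c :: "'a \<Rightarrow> real"
  assumes "finite J" "\<And>j. j \<in> J \<Longrightarrow> \<bar>a j\<bar> \<le> c j" "\<And>j. j \<in> J \<Longrightarrow> \<bar>d j\<bar> \<le> e * c j" "0 \<le> e"
  shows "\<bar>first_order J a d\<bar> \<le> real (card J) * e * (\<Prod>j\<in>J. c j)"
  using assms
proof (induction J rule: finite_induct)
  case empty
  then show ?case by (simp add: first_order_def)
next
  case (insert i J)
  have c0: "0 \<le> c j" if "j \<in> insert i J" for j
    using insert.prems(1)[OF that] by linarith
  have "\<bar>first_order (insert i J) a d\<bar> \<le> \<bar>d i\<bar> * \<bar>\<Prod>j\<in>J. a j\<bar> + \<bar>a i\<bar> * \<bar>first_order J a d\<bar>"
    using insert by (simp add: first_order_insert abs_mult order_trans[OF abs_triangle_ineq])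
  also have "\<dots> \<le> (e * c i) * (\<Prod>j\<in>J. c j) + c i * (real (card J) * e * (\<Prod>j\<in>J. c j))"
    using insert c0
    by (intro add_mono mult_mono abs_prod_le) (auto intro!: prod_nonneg)
  also have "\<dots> = real (card (insert i J)) * e * (\<Prod>j\<in>insert i J. c j)"
    using insert by (simp add: algebra_simps)
  finally show ?case .
qed

lemma abs_prod_add_le:
  fixes a d c :: "'a \<Rightarrow> real"
  assumes "finite J" "\<And>j. j \<in> J \<Longrightarrow> \<bar>a j\<bar> \<le> c j" "\<And>j. j \<in> J \<Longrightarrow> \<bar>d j\<bar> \<le> e * c j" "0 \<le> e"
  shows "\<bar>\<Prod>j\<in>J. a j + d j\<bar> \<le> (1 + e) ^ card J * (\<Prod>j\<in>J. c j)"
proof -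
  have "\<bar>a j + d j\<bar> \<le> (1 + e) * c j" if "j \<in> J" for j
    using abs_triangle_ineq[of "a j" "d j"] assms(2,3)[OF that] by (simp add: algebra_simps)
  then have "\<bar>\<Prod>j\<in>J. a j + d j\<bar> \<le> (\<Prod>j\<in>J. (1 + e) * c j)"
    by (rule abs_prod_le)
  then show ?thesis
    by (simp add: prod.distrib)
qed

lemma abs_prod_add_remainder_le:
  fixes a d c :: "'a \<Rightarrow> real"
  assumes "finite J" "\<And>j. j \<in> J \<Longrightarrow> \<bar>a j\<bar> \<le> c j" "\<And>j. j \<in> J \<Longrightarrow> \<bar>d j\<bar> \<le> e * c j" "0 \<le> e"
  shows
  "\<bar>(\<Prod>j\<in>J. a j + d j) - (\<Prod>j\<in>J. a j) - first_order J a d\<bar>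
     \<le> (real (card J))\<^sup>2 * e\<^sup>2 * ((1 + e) ^ card J * (\<Prod>j\<in>J. c j))"
  using assms
proof (induction J rule: finite_induct)
  case empty
  then show ?case by (simp add: first_order_def)
next
  case (insert i J)
  let ?R = "(\<Prod>j\<in>J. a j + d j) - (\<Prod>j\<in>J. a j) - first_order J a d"
  let ?N = "real (card J)"
  let ?P = "\<Prod>j\<in>J. c j"
  let ?g = "(1 + e) * (1 + e) ^ card J"
  have c0: "0 \<le> c j" if "j \<in> insert i J" for j
    using insert.prems(1)[OF that] by linarith
  have P0: "0 \<le> ?P"
    using c0 by (simp add: prod_nonneg)
  have g1: "1 \<le> ?g"
    using insert.prems(3) by (metis le_add_same_cancel1 one_le_power power_Suc)
  have ad: "\<bar>a i + d i\<bar> \<le> (1 + e) * c i"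
    using insert.prems(1,2)[of i] abs_triangle_ineq[of "a i" "d i"] by (simp add: algebra_simps)
  have "(\<Prod>j\<in>insert i J. a j + d j) - (\<Prod>j\<in>insert i J. a j) - first_order (insert i J) a d
      = (a i + d i) * ?R + d i * first_order J a d"
    using insert by (simp add: first_order_insert algebra_simps)
  also have "\<bar>\<dots>\<bar> \<le> ((1 + e) * c i) * (?N\<^sup>2 * e\<^sup>2 * ((1 + e) ^ card J * ?P)) + (e * c i) * (?N * e * ?P)"
    using insert ad c0
    by (intro order_trans[OF abs_triangle_ineq] add_mono)
       (auto simp: abs_mult intro!: mult_mono abs_first_order_le)
  also have "\<dots> \<le> ((1 + e) * c i) * (?N\<^sup>2 * e\<^sup>2 * ((1 + e) ^ card J * ?P))
      + ?g * ((2 * ?N + 1) * (c i * e\<^sup>2 * ?P))"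
  proof -
    have X0: "0 \<le> c i * e\<^sup>2 * ?P"
      using c0[of i] P0 by simp
    have "(e * c i) * (?N * e * ?P) = ?N * (c i * e\<^sup>2 * ?P)"
      by (simp add: power2_eq_square mult_ac)
    also have "\<dots> \<le> (2 * ?N + 1) * (c i * e\<^sup>2 * ?P)"
      using X0 by (intro mult_right_mono) auto
    also have "\<dots> \<le> ?g * ((2 * ?N + 1) * (c i * e\<^sup>2 * ?P))"
      using mult_right_mono[OF g1, of "(2 * ?N + 1) * (c i * e\<^sup>2 * ?P)"] X0 by simp
    finally show ?thesis by simp
  qed
  also have "\<dots> = (real (card (insert i J)))\<^sup>2 * e\<^sup>2 * ((1 + e) ^ card (insert i J) * (\<Prod>j\<in>insert i J. c j))"
    using insert by (simp add: algebra_simps power2_eq_square)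
  finally show ?case .
qed

text \<open>For \<open>e \<le> 1\<close> all growth factors \<open>(1 + e)\<^sup>k\<close> are bounded by \<open>2\<^sup>k\<close>.\<close>

lemma prod_add_expansion_bounds:
  fixes a d c :: "'a \<Rightarrow> real"
  assumes fin: "finite J" and a_le: "\<And>j. j \<in> J \<Longrightarrow> \<bar>a j\<bar> \<le> c j"
    and d_le: "\<And>j. j \<in> J \<Longrightarrow> \<bar>d j\<bar> \<le> e * c j" and e: "0 \<le> e" "e \<le> 1"
  defines "C \<equiv> \<Prod>j\<in>J. c j" and "N \<equiv> real (card J)"
  shows "\<bar>\<Prod>j\<in>J. a j\<bar> \<le> C"
    and "\<bar>\<Prod>j\<in>J. a j + d j\<bar> \<le> 2 ^ card J * C"
    and "\<bar>first_order J a d\<bar> \<le> N * C * e"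
    and "\<bar>(\<Prod>j\<in>J. a j + d j) - (\<Prod>j\<in>J. a j) - first_order J a d\<bar> \<le> N\<^sup>2 * 2 ^ card J * C * e\<^sup>2"
    and "\<bar>(\<Prod>j\<in>J. a j + d j) - (\<Prod>j\<in>J. a j)\<bar> \<le> (N + N\<^sup>2 * 2 ^ card J) * C * e"
proof -
  have C0: "0 \<le> C"
    unfolding C_def using a_le by (intro prod_nonneg) (meson abs_ge_zero order_trans)
  have pow: "(1 + e) ^ card J \<le> 2 ^ card J"
    using e by (intro power_mono) auto
  show "\<bar>\<Prod>j\<in>J. a j\<bar> \<le> C"
    unfolding C_def using a_le by (rule abs_prod_le)
  have "\<bar>\<Prod>j\<in>J. a j + d j\<bar> \<le> (1 + e) ^ card J * C"
    unfolding C_def by (rule abs_prod_add_le) (use fin a_le d_le e in auto)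
  then show "\<bar>\<Prod>j\<in>J. a j + d j\<bar> \<le> 2 ^ card J * C"
    using mult_right_mono[OF pow C0] by linarith
  have "\<bar>first_order J a d\<bar> \<le> real (card J) * e * C"
    unfolding C_def by (rule abs_first_order_le) (use fin a_le d_le e in auto)
  then show FO: "\<bar>first_order J a d\<bar> \<le> N * C * e"
    unfolding N_def by (simp add: mult_ac)
  have "(real (card J))\<^sup>2 * e\<^sup>2 * ((1 + e) ^ card J * C) \<le> N\<^sup>2 * 2 ^ card J * C * e\<^sup>2"
    using mult_left_mono[OF mult_right_mono[OF pow C0], of "N\<^sup>2 * e\<^sup>2"] unfolding N_def
    by (simp add: mult_ac)
  moreover have "\<bar>(\<Prod>j\<in>J. a j + d j) - (\<Prod>j\<in>J. a j) - first_order J a d\<bar>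
      \<le> (real (card J))\<^sup>2 * e\<^sup>2 * ((1 + e) ^ card J * C)"
    unfolding C_def by (rule abs_prod_add_remainder_le) (use fin a_le d_le e in auto)
  ultimately show R: "\<bar>(\<Prod>j\<in>J. a j + d j) - (\<Prod>j\<in>J. a j) - first_order J a d\<bar>
      \<le> N\<^sup>2 * 2 ^ card J * C * e\<^sup>2"
    by linarith
  have "N\<^sup>2 * 2 ^ card J * C * e\<^sup>2 \<le> N\<^sup>2 * 2 ^ card J * C * e"
    using e C0 by (intro mult_left_mono) (auto simp: power2_eq_square mult_left_le_one_le)
  then show "\<bar>(\<Prod>j\<in>J. a j + d j) - (\<Prod>j\<in>J. a j)\<bar> \<le> (N + N\<^sup>2 * 2 ^ card J) * C * e"
    using FO R by (simp add: algebra_simps)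
qed

lemma member_le_sum3:
  fixes g :: "'a \<Rightarrow> 'b \<Rightarrow> 'c \<Rightarrow> real"
  assumes "finite A" "finite B" "finite C" "a \<in> A" "b \<in> B" "c \<in> C" "\<And>x y z. 0 \<le> g x y z"
  shows "g a b c \<le> (\<Sum>x\<in>A. \<Sum>y\<in>B. \<Sum>z\<in>C. g x y z)"
proof -
  have "g a b c \<le> (\<Sum>z\<in>C. g a b z)"
    using assms by (intro member_le_sum) auto
  also have "\<dots> \<le> (\<Sum>y\<in>B. \<Sum>z\<in>C. g a y z)"
    using assms by (intro member_le_sum[where f="\<lambda>y. \<Sum>z\<in>C. g a y z"]) (auto intro!: sum_nonneg)
  also have "\<dots> \<le> (\<Sum>x\<in>A. \<Sum>y\<in>B. \<Sum>z\<in>C. g x y z)"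
    using assms by (intro member_le_sum[where f="\<lambda>x. \<Sum>y\<in>B. \<Sum>z\<in>C. g x y z"])
      (auto intro!: sum_nonneg)
  finally show ?thesis .
qed

lemma finite_physC [simp]: "finite (physC m U j)"
  by (simp add: physC_def finite_PiE)

lemma finite_leftC [simp]: "finite (leftC m U j)"
  by (simp add: leftC_def finite_PiE)

lemma finite_rightC [simp]: "finite (rightC m n U j)"
  by (simp add: rightC_def finite_PiE)

lemma finite_vbonds_col [simp]: "finite (vbonds_col m U j)"
  by (simp add: vbonds_col_def finite_PiE)

lemma finite_hbonds [simp]: "finite (hbonds m n U)"
proof -
  have "{(i, j). i < m \<and> j + 1 < n} \<subseteq> {..<m} \<times> {..<n}"
    by auto
  then show ?thesis
    unfolding hbonds_def by (intro finite_PiE) (auto intro: finite_subset)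
qed

lemma abs_le_cshape_norm:
  assumes "x \<in> physC m U j" "l \<in> leftC m U j" "r \<in> rightC m n U j"
  shows "\<bar>t x l r\<bar> \<le> cshape_norm m n U j t"
  unfolding cshape_norm_def
  by (rule real_le_rsqrt) (use assms in \<open>simp add: member_le_sum3[where g="\<lambda>x l r. (t x l r)\<^sup>2"]\<close>)

lemma abs_le_nshape_norm:
  assumes "p < phys U i j" "l < ldim U i j" "r < rdim n U i j" "u < udim U i j" "d < ddim m U i j"
  shows "\<bar>t p l r u d\<bar> \<le> nshape_norm m n U i j t"
proof -
  have "(t p l r u d)\<^sup>2 \<le> (\<Sum>u<udim U i j. \<Sum>d<ddim m U i j. (t p l r u d)\<^sup>2)"
    using member_le_sum3[of "{0::nat}" "{..<udim U i j}" "{..<ddim m U i j}" 0 u d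
        "\<lambda>_ u d. (t p l r u d)\<^sup>2"] assms by simp
  also have "\<dots> \<le> (\<Sum>p<phys U i j. \<Sum>l<ldim U i j. \<Sum>r<rdim n U i j.
                    \<Sum>u<udim U i j. \<Sum>d<ddim m U i j. (t p l r u d)\<^sup>2)"
    using assms by (intro member_le_sum3) (auto intro!: sum_nonneg)
  finally show ?thesis
    unfolding nshape_norm_def by (intro real_le_rsqrt) simp
qed

lemma cshape_norm_nonneg: "0 \<le> cshape_norm m n U j t"
  by (simp add: cshape_norm_def sum_nonneg)

lemma nshape_norm_nonneg: "0 \<le> nshape_norm m n U i j t"
  by (simp add: nshape_norm_def sum_nonneg)

lemma cshape_norm_scale:
  "0 \<le> e \<Longrightarrow> cshape_norm m n U j (\<lambda>p a b. e * t p a b) = e * cshape_norm m n U j t"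
  unfolding cshape_norm_def
  by (simp add: power_mult_distrib sum_distrib_left[symmetric] real_sqrt_mult)

lemma nshape_norm_scale:
  "0 \<le> e \<Longrightarrow> nshape_norm m n U i j (\<lambda>p l r u d. e * t p l r u d) = e * nshape_norm m n U i j t"
  unfolding nshape_norm_def
  by (simp add: power_mult_distrib sum_distrib_left[symmetric] real_sqrt_mult)

lemma is_pert_zero:
  "0 \<le> e1 \<Longrightarrow> 0 \<le> e2 \<Longrightarrow> is_pert m n U e1 e2 (\<lambda>_ _ _ _. 0) (\<lambda>_ _ _ _ _ _. 0)"
  by (auto simp: is_pert_def cshape_norm_def nshape_norm_def intro!: sum_nonneg mult_nonneg_nonneg)

lemma physIdx_lt: "x \<in> physIdx m n U \<Longrightarrow> i < m \<Longrightarrow> j < n \<Longrightarrow> x (i, j) < phys U i j"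
  by (auto simp: physIdx_def PiE_iff)

lemma hbonds_lt: "h \<in> hbonds m n U \<Longrightarrow> i < m \<Longrightarrow> j + 1 < n \<Longrightarrow> h (i, j) < hdim U i j"
  by (auto simp: hbonds_def PiE_iff)

lemma lidx_lt: "h \<in> hbonds m n U \<Longrightarrow> i < m \<Longrightarrow> j < n \<Longrightarrow> lidx h i j < ldim U i j"
  using hbonds_lt[of h m n U i "j - 1"] by (auto simp: lidx_def ldim_def)

lemma ridx_lt: "h \<in> hbonds m n U \<Longrightarrow> i < m \<Longrightarrow> j < n \<Longrightarrow> ridx n h i j < rdim n U i j"
  using hbonds_lt by (auto simp: ridx_def rdim_def)

lemma cu_lt: "v \<in> vbonds_col m U j \<Longrightarrow> i < m \<Longrightarrow> cu v i < udim U i j"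
  by (auto simp: cu_def udim_def vbonds_col_def PiE_iff)

lemma cd_lt: "v \<in> vbonds_col m U j \<Longrightarrow> i < m \<Longrightarrow> cd m v i < ddim m U i j"
  by (auto simp: cd_def ddim_def vbonds_col_def PiE_iff)

lemma xcol_in_physC: "x \<in> physIdx m n U \<Longrightarrow> j < n \<Longrightarrow> xcol m x j \<in> physC m U j"
  by (auto simp: physC_def xcol_def PiE_iff physIdx_lt)

lemma lcol_in_leftC: "h \<in> hbonds m n U \<Longrightarrow> j < n \<Longrightarrow> lcol m h j \<in> leftC m U j"
  by (auto simp: leftC_def lcol_def PiE_iff lidx_lt)

lemma rcol_in_rightC: "h \<in> hbonds m n U \<Longrightarrow> j < n \<Longrightarrow> rcol m n h j \<in> rightC m n U j"
  by (auto simp: rightC_def rcol_def PiE_iff ridx_lt)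

lemma abs_col_entry_le:
  assumes "x \<in> physIdx m n U" "h \<in> hbonds m n U" "j < n"
  shows "\<bar>t (xcol m x j) (lcol m h j) (rcol m n h j)\<bar> \<le> cshape_norm m n U j t"
  using assms by (intro abs_le_cshape_norm xcol_in_physC lcol_in_leftC rcol_in_rightC)

lemma abs_node_entry_le:
  assumes "x \<in> physIdx m n U" "h \<in> hbonds m n U" "v \<in> vbonds_col m U (n - 1)" "i < m" "1 \<le> n"
  shows "\<bar>t (xcol m x (n - 1) i) (lcol m h (n - 1) i) 0 (cu v i) (cd m v i)\<bar> \<le> nshape_norm m n U i (n - 1) t"
  using assms physIdx_lt[OF assms(1)] lidx_lt[OF assms(2)] cu_lt[OF assms(3)] cd_lt[OF assms(3)]
  by (intro abs_le_nshape_norm) (auto simp: xcol_def lcol_def rdim_def)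

definition uncurry_on :: "'j set \<Rightarrow> ('j \<Rightarrow> 'i set) \<Rightarrow> ('j \<Rightarrow> 'i \<Rightarrow> 'a) \<Rightarrow> 'i \<times> 'j \<Rightarrow> 'a" where
  "uncurry_on J I F = (\<lambda>(i, j). if j \<in> J \<and> i \<in> I j then F j i else undefined)"

lemma uncurry_on_restrict:
  "f \<in> Pi\<^sub>E {(i, j). j \<in> J \<and> i \<in> I j} P \<Longrightarrow> uncurry_on J I (\<lambda>j\<in>J. \<lambda>i\<in>I j. f (i, j)) = f"
  by (auto simp: uncurry_on_def PiE_iff extensional_def fun_eq_iff)

lemma sum_PiE_uncurry_on:
  "(\<Sum>f\<in>Pi\<^sub>E {(i, j). j \<in> J \<and> i \<in> I j} P. g f)
     = (\<Sum>F\<in>Pi\<^sub>E J (\<lambda>j. Pi\<^sub>E (I j) (\<lambda>i. P (i, j))). g (uncurry_on J I F))"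
  by (rule sum.reindex_bij_witness[of _ "uncurry_on J I" "\<lambda>f. \<lambda>j\<in>J. \<lambda>i\<in>I j. f (i, j)"])
     (auto simp: uncurry_on_restrict, auto simp: uncurry_on_def PiE_iff extensional_def fun_eq_iff
        split: if_splits)

lemma sum_vbonds_by_columns:
  "(\<Sum>v\<in>vbonds m n U. g v)
     = (\<Sum>V\<in>Pi\<^sub>E {..<n} (vbonds_col m U). g (uncurry_on {..<n} (\<lambda>_. {..<m - 1}) V))"
proof -
  have "vbonds m n U = Pi\<^sub>E {(i, j). j \<in> {..<n} \<and> i \<in> {..<m - 1}} (\<lambda>(i, j). {..<vdim U i j})"
    unfolding vbonds_def by (rule arg_cong2[where f=PiE]) auto
  then show ?thesis
    unfolding vbonds_col_def by (simp only:) (subst sum_PiE_uncurry_on, simp)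
qed

lemma uidx_uncurry_on:
  "i < m \<Longrightarrow> j < n \<Longrightarrow> uidx (uncurry_on {..<n} (\<lambda>_. {..<m - 1}) V) i j = cu (V j) i"
  by (auto simp: uidx_def cu_def uncurry_on_def)

lemma didx_uncurry_on:
  "j < n \<Longrightarrow> didx m (uncurry_on {..<n} (\<lambda>_. {..<m - 1}) V) i j = cd m (V j) i"
  by (auto simp: didx_def cd_def uncurry_on_def)

lemma pert_contraction_zero:
  assumes n: "1 \<le> n"
  shows "pert_contraction m n U (\<lambda>_ _ _ _. 0) (\<lambda>_ _ _ _ _ _. 0) x = contraction m n U x"
proof -
  let ?N = "\<lambda>h j i. node U i j (x (i, j)) (lidx h i j) (ridx n h i j)"
  let ?G = "\<lambda>h j v. \<Prod>i<m. ?N h j i (cu v i) (cd m v i)"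
  have col: "col_tensor m n U j (xcol m x j) (lcol m h j) (rcol m n h j)
      = (\<Sum>v\<in>vbonds_col m U j. ?G h j v)" for h j
    unfolding col_tensor_def xcol_def lcol_def rcol_def by (intro sum.cong refl prod.cong) auto
  have last: "last_col m n U (\<lambda>_ _ _ _ _ _. 0) (xcol m x (n - 1)) (lcol m h (n - 1))
      = (\<Sum>v\<in>vbonds_col m U (n - 1). ?G h (n - 1) v)" for h
    using n unfolding last_col_def xcol_def lcol_def ridx_def by (intro sum.cong refl prod.cong) auto
  have split_last: "(\<Prod>j<n. f j) = (\<Prod>j<n - 1. f j) * f (n - 1)" for f :: "nat \<Rightarrow> real"
    using n prod.lessThan_Suc[of f "n - 1"] by simp
  have "pert_contraction m n U (\<lambda>_ _ _ _. 0) (\<lambda>_ _ _ _ _ _. 0) x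
      = (\<Sum>h\<in>hbonds m n U. \<Prod>j<n. \<Sum>v\<in>vbonds_col m U j. ?G h j v)"
    unfolding pert_contraction_def split_last by (simp only: add_0_right col last)
  also have "\<dots> = (\<Sum>h\<in>hbonds m n U. \<Sum>V\<in>Pi\<^sub>E {..<n} (vbonds_col m U). \<Prod>j<n. ?G h j (V j))"
    by (intro sum.cong refl prod_sum_PiE) auto
  also have "\<dots> = contraction m n U x"
    unfolding contraction_def sum_vbonds_by_columns
    by (intro sum.cong refl, subst prod.swap, intro prod.cong refl)
       (simp only: lessThan_iff uidx_uncurry_on didx_uncurry_on)
  finally show ?thesis .
qed

lemma pert_contraction_scaled:
  "pert_contraction m n U (\<lambda>j p a b. e1 * col_tensor m n U j p a b)
      (\<lambda>i p l r u d. e2 * node U i (n - 1) p l r u d) x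
     = (1 + e1) ^ (n - 1) * (1 + e2) ^ m * pert_contraction m n U (\<lambda>_ _ _ _. 0) (\<lambda>_ _ _ _ _ _. 0) x"
proof -
  have eqf: "\<And>y. y + e1 * y = (1 + e1) * y" "\<And>y. y + e2 * y = (1 + e2) * y"
    by algebra+
  have "last_col m n U (\<lambda>i p l r u d. e2 * node U i (n - 1) p l r u d) xc l
      = (1 + e2) ^ m * last_col m n U (\<lambda>_ _ _ _ _ _. 0) xc l" for xc l
    unfolding last_col_def sum_distrib_left
    by (intro sum.cong refl) (simp only: eqf add_0_right prod.distrib prod_constant card_lessThan)
  moreover have "(\<Prod>j<n - 1. A j + e1 * A j) = (1 + e1) ^ (n - 1) * (\<Prod>j<n - 1. A j + 0)" for A
    by (simp only: eqf add_0_right prod.distrib prod_constant card_lessThan)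
  ultimately show ?thesis
    unfolding pert_contraction_def sum_distrib_left by (simp only: mult_ac)
qed

section \<open>Perturbations of an arbitrary PEPS\<close>

lemma abs_sum_le_card_mult:
  assumes "\<And>x. x \<in> A \<Longrightarrow> \<bar>f x\<bar> \<le> M"
  shows "\<bar>\<Sum>x\<in>A. f x\<bar> \<le> real (card A) * M"
  using order_trans[OF sum_abs sum_bounded_above[of A "\<lambda>x. \<bar>f x\<bar>" M]] assms by blast

definition pert_bound_const :: "nat \<Rightarrow> nat \<Rightarrow> peps \<Rightarrow> real" where
  "pert_bound_const m n U = real (card (hbonds m n U)) *
     (2 ^ (n - 1) * (\<Prod>j<n - 1. cshape_norm m n U j (col_tensor m n U j))) *
     (real (card (vbonds_col m U (n - 1)))
       * (2 ^ m * (\<Prod>i<m. nshape_norm m n U i (n - 1) (node U i (n - 1)))))"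

lemma abs_pert_contraction_le:
  assumes n: "1 \<le> n" and e: "0 \<le> e1" "e1 \<le> 1" "0 \<le> e2" "e2 \<le> 1"
    and p: "is_pert m n U e1 e2 \<Delta> \<delta>" and x: "x \<in> physIdx m n U"
  shows "\<bar>pert_contraction m n U \<Delta> \<delta> x\<bar> \<le> pert_bound_const m n U"
proof -
  let ?cA = "\<lambda>j. cshape_norm m n U j (col_tensor m n U j)"
  let ?cN = "\<lambda>i. nshape_norm m n U i (n - 1) (node U i (n - 1))"
  have cols: "\<bar>\<Prod>j\<in>{..<n - 1}. col_tensor m n U j (xcol m x j) (lcol m h j) (rcol m n h j)
                        + \<Delta> j (xcol m x j) (lcol m h j) (rcol m n h j)\<bar>
      \<le> 2 ^ card {..<n - 1} * (\<Prod>j\<in>{..<n - 1}. ?cA j)" if h: "h \<in> hbonds m n U" for h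
    using p e(1,2)
    by (intro prod_add_expansion_bounds(2))
       (auto simp: is_pert_def intro!: order_trans[OF abs_col_entry_le[OF x h]])
  have nodes: "\<bar>\<Prod>i\<in>{..<m}. node U i (n - 1) (xcol m x (n - 1) i) (lcol m h (n - 1) i) 0 (cu v i) (cd m v i)
                 + \<delta> i (xcol m x (n - 1) i) (lcol m h (n - 1) i) 0 (cu v i) (cd m v i)\<bar>
      \<le> 2 ^ card {..<m} * (\<Prod>i\<in>{..<m}. ?cN i)"
    if h: "h \<in> hbonds m n U" and v: "v \<in> vbonds_col m U (n - 1)" for h v
  proof (rule prod_add_expansion_bounds(2))
    fix i assume "i \<in> {..<m}"
    then have i: "i < m"
      by simp
    show "\<bar>node U i (n - 1) (xcol m x (n - 1) i) (lcol m h (n - 1) i) 0 (cu v i) (cd m v i)\<bar> \<le> ?cN i"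
      by (rule abs_node_entry_le[OF x h v i n])
    show "\<bar>\<delta> i (xcol m x (n - 1) i) (lcol m h (n - 1) i) 0 (cu v i) (cd m v i)\<bar> \<le> e2 * ?cN i"
      by (rule order_trans[OF abs_node_entry_le[OF x h v i n]]) (use p i in \<open>simp add: is_pert_def\<close>)
  qed (use e in auto)
  have last: "\<bar>last_col m n U \<delta> (xcol m x (n - 1)) (lcol m h (n - 1))\<bar>
      \<le> real (card (vbonds_col m U (n - 1))) * (2 ^ m * (\<Prod>i<m. ?cN i))" if h: "h \<in> hbonds m n U" for h
    unfolding last_col_def using nodes[OF h] by (intro abs_sum_le_card_mult) simp
  show ?thesis
    unfolding pert_contraction_def pert_bound_const_def mult.assoc[of "real (card (hbonds m n U))"]
    using cols
    by (intro abs_sum_le_card_mult)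
       (simp only: abs_mult, intro mult_mono last,
        auto intro!: mult_nonneg_nonneg prod_nonneg cshape_norm_nonneg)
qed

lemma tensor_norm_le_const:
  assumes "\<And>x. x \<in> physIdx m n U \<Longrightarrow> \<bar>f x\<bar> \<le> M"
  shows "tensor_norm m n U f \<le> sqrt (real (card (physIdx m n U))) * M"
proof -
  have "L2_set f (physIdx m n U) = L2_set (\<lambda>x. \<bar>f x\<bar>) (physIdx m n U)"
    by (simp add: L2_set_def)
  also have "\<dots> \<le> L2_set (\<lambda>_. M) (physIdx m n U)"
    using assms by (intro L2_set_mono) auto
  also have "\<dots> = sqrt (real (card (physIdx m n U))) * M"
  proof (cases "physIdx m n U = {}")
    case False
    then obtain x where "x \<in> physIdx m n U"
      by blast
    then have "0 \<le> M"
      using assms by fastforce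
    then show ?thesis
      by (simp add: L2_set_constant)
  qed simp
  finally show ?thesis
    by (simp add: tensor_norm_def L2_set_def)
qed

lemma rel_err_le_const:
  assumes n: "1 \<le> n" and e: "0 \<le> e1" "e1 \<le> 1" "0 \<le> e2" "e2 \<le> 1"
    and p: "is_pert m n U e1 e2 \<Delta> \<delta>"
  shows "rel_err m n U \<Delta> \<delta>
    \<le> sqrt (real (card (physIdx m n U))) * (2 * pert_bound_const m n U)
      / tensor_norm m n U (contraction m n U)"
proof -
  have "\<bar>pert_contraction m n U \<Delta> \<delta> x - contraction m n U x\<bar> \<le> 2 * pert_bound_const m n U"
    if x: "x \<in> physIdx m n U" for x
    using abs_pert_contraction_le[OF n e p x]
      abs_pert_contraction_le[OF n e is_pert_zero[OF e(1,3)] x] pert_contraction_zero[OF n, of m U x]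
    by linarith
  then show ?thesis
    unfolding rel_err_def
    by (intro divide_right_mono tensor_norm_le_const) (auto simp: tensor_norm_def intro!: sum_nonneg)
qed

lemma rel_err_scaled:
  assumes n: "1 \<le> n" and nz: "tensor_norm m n U (contraction m n U) \<noteq> 0"
    and e: "0 \<le> e1" "0 \<le> e2"
  shows "rel_err m n U (\<lambda>j p a b. e1 * col_tensor m n U j p a b)
      (\<lambda>i p l r u d. e2 * node U i (n - 1) p l r u d) = (1 + e1) ^ (n - 1) * (1 + e2) ^ m - 1"
proof -
  let ?k = "(1 + e1) ^ (n - 1) * (1 + e2) ^ m"
  have k: "1 \<le> ?k"
    using e mult_mono[of 1 "(1 + e1) ^ (n - 1)" 1 "(1 + e2) ^ m"] by (simp add: one_le_power)
  have "(\<lambda>x. pert_contraction m n U (\<lambda>j p a b. e1 * col_tensor m n U j p a b)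
          (\<lambda>i p l r u d. e2 * node U i (n - 1) p l r u d) x - contraction m n U x)
      = (\<lambda>x. (?k - 1) * contraction m n U x)"
    by (rule ext, simp only: pert_contraction_scaled pert_contraction_zero[OF n])
       (simp add: algebra_simps)
  moreover have "tensor_norm m n U (\<lambda>x. (?k - 1) * contraction m n U x)
      = (?k - 1) * tensor_norm m n U (contraction m n U)"
    unfolding tensor_norm_def using k
    by (simp add: power_mult_distrib sum_distrib_left[symmetric] real_sqrt_mult)
  ultimately show ?thesis
    using nz unfolding rel_err_def by simp
qed

lemma Bernoulli_inequality_prod:
  fixes e1 e2 :: real
  assumes "0 \<le> e1" "0 \<le> e2"
  shows "real k * e1 + real l * e2 \<le> (1 + e1) ^ k * (1 + e2) ^ l - 1"
proof -
  have "(1 + real k * e1) * (1 + real l * e2) \<le> (1 + e1) ^ k * (1 + e2) ^ l"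
    using assms by (intro mult_mono Bernoulli_inequality) auto
  moreover have "0 \<le> real k * e1 * (real l * e2)"
    using assms by simp
  ultimately show ?thesis
    by (simp add: algebra_simps)
qed

lemma sup_err_ge:
  assumes n: "1 \<le> n" and nz: "tensor_norm m n U (contraction m n U) \<noteq> 0"
    and e: "0 \<le> e1" "e1 \<le> 1" "0 \<le> e2" "e2 \<le> 1"
  shows "e1 * real (n - 1) + e2 * real m \<le> sup_err m n U e1 e2"
  unfolding sup_err_def
proof (rule cSup_upper2)
  let ?\<Delta> = "\<lambda>j p a b. e1 * col_tensor m n U j p a b"
  let ?\<delta> = "\<lambda>i p l r u d. e2 * node U i (n - 1) p l r u d"
  have "is_pert m n U e1 e2 ?\<Delta> ?\<delta>"
    using e by (simp add: is_pert_def cshape_norm_scale nshape_norm_scale)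
  then show "rel_err m n U ?\<Delta> ?\<delta> \<in> {rel_err m n U \<Delta> \<delta> |\<Delta> \<delta>. is_pert m n U e1 e2 \<Delta> \<delta>}"
    by blast
  show "e1 * real (n - 1) + e2 * real m \<le> rel_err m n U ?\<Delta> ?\<delta>"
    using Bernoulli_inequality_prod[OF e(1,3), of "n - 1" m] rel_err_scaled[OF n nz e(1,3)]
    by (simp add: mult.commute)
  show "bdd_above {rel_err m n U \<Delta> \<delta> |\<Delta> \<delta>. is_pert m n U e1 e2 \<Delta> \<delta>}"
    using rel_err_le_const[OF n e, of m U] by (intro bdd_aboveI) blast
qed

section \<open>The contraction as a chain of columns\<close>

definition contraction_with :: "nat \<Rightarrow> nat \<Rightarrow> peps \<Rightarrow>
    (nat \<Rightarrow> (nat \<Rightarrow> nat) \<Rightarrow> (nat \<Rightarrow> nat) \<Rightarrow> (nat \<Rightarrow> nat) \<Rightarrow> real) \<Rightarrow>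
    ((nat \<Rightarrow> nat) \<Rightarrow> (nat \<Rightarrow> nat) \<Rightarrow> real) \<Rightarrow> (nat \<times> nat \<Rightarrow> nat) \<Rightarrow> real" where
  "contraction_with m n U A L x = (\<Sum>h\<in>hbonds m n U.
      (\<Prod>j<n - 1. A j (xcol m x j) (lcol m h j) (rcol m n h j)) * L (xcol m x (n - 1)) (lcol m h (n - 1)))"

definition last_col_with :: "nat \<Rightarrow> nat \<Rightarrow> peps \<Rightarrow> (nat \<Rightarrow> nat \<Rightarrow> nat \<Rightarrow> nat \<Rightarrow> nat \<Rightarrow> nat \<Rightarrow> real) \<Rightarrow>
    (nat \<Rightarrow> nat) \<Rightarrow> (nat \<Rightarrow> nat) \<Rightarrow> real" where
  "last_col_with m n U G xc l = (\<Sum>v\<in>vbonds_col m U (n - 1). \<Prod>i<m. G i (xc i) (l i) 0 (cu v i) (cd m v i))"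

definition last_nodes :: "nat \<Rightarrow> peps \<Rightarrow> nat \<Rightarrow> nat \<Rightarrow> nat \<Rightarrow> nat \<Rightarrow> nat \<Rightarrow> nat \<Rightarrow> real" where
  "last_nodes n U i = node U i (n - 1)"

lemma pert_contraction_eq_contraction_with:
  "pert_contraction m n U \<Delta> \<delta> x = contraction_with m n U (\<lambda>j p a b. col_tensor m n U j p a b + \<Delta> j p a b)
     (last_col_with m n U (\<lambda>i p l r u d. last_nodes n U i p l r u d + \<delta> i p l r u d)) x"
  unfolding pert_contraction_def contraction_with_def last_col_def last_col_with_def last_nodes_def ..

lemma contraction_eq_contraction_with:
  "1 \<le> n \<Longrightarrow> contraction m n U
     = contraction_with m n U (\<lambda>j. col_tensor m n U j) (last_col_with m n U (last_nodes n U))"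
  using pert_contraction_zero[of n m U] by (simp add: pert_contraction_eq_contraction_with fun_eq_iff)

definition zero_bonds :: "nat \<Rightarrow> nat \<Rightarrow> nat" where
  "zero_bonds m = (\<lambda>i\<in>{..<m}. 0)"

definition col_factors :: "nat \<Rightarrow> (nat \<Rightarrow> 'x \<Rightarrow> 'b \<Rightarrow> 'b \<Rightarrow> real) \<Rightarrow> ('x \<Rightarrow> 'b \<Rightarrow> real) \<Rightarrow>
    nat \<Rightarrow> 'x \<Rightarrow> 'b \<Rightarrow> 'b \<Rightarrow> real" where
  "col_factors n A L j = (if j < n - 1 then A j else (\<lambda>p a b. L p a))"

definition phys_cols :: "nat \<Rightarrow> nat \<Rightarrow> (nat \<times> nat \<Rightarrow> nat) \<Rightarrow> nat \<Rightarrow> nat \<Rightarrow> nat" where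
  "phys_cols m n x = (\<lambda>j\<in>{..<n}. xcol m x j)"

lemma sum_hbonds_by_columns:
  "(\<Sum>h\<in>hbonds m n U. g h)
     = (\<Sum>bs\<in>Pi\<^sub>E {..<n - 1} (rightC m n U). g (uncurry_on {..<n - 1} (\<lambda>_. {..<m}) bs))"
proof -
  have "hbonds m n U = Pi\<^sub>E {(i, j). j \<in> {..<n - 1} \<and> i \<in> {..<m}} (\<lambda>(i, j). {..<hdim U i j})"
    unfolding hbonds_def by (rule arg_cong2[where f=PiE]) auto
  moreover have "Pi\<^sub>E {..<n - 1} (\<lambda>j. Pi\<^sub>E {..<m} (\<lambda>i. {..<hdim U i j})) = Pi\<^sub>E {..<n - 1} (rightC m n U)"
    unfolding rightC_def rdim_def by (intro PiE_cong) auto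
  ultimately show ?thesis
    by (simp only: sum_PiE_uncurry_on) simp
qed

lemma lcol_uncurry_on:
  assumes "bs \<in> Pi\<^sub>E {..<n - 1} (rightC m n U)" and "j < n"
  shows "lcol m (uncurry_on {..<n - 1} (\<lambda>_. {..<m}) bs) j = (if j = 0 then zero_bonds m else bs (j - 1))"
  using assms by (auto simp: lcol_def lidx_def zero_bonds_def uncurry_on_def rightC_def PiE_iff
      extensional_def fun_eq_iff)

lemma rcol_uncurry_on:
  assumes "bs \<in> Pi\<^sub>E {..<n - 1} (rightC m n U)" and "j < n - 1"
  shows "rcol m n (uncurry_on {..<n - 1} (\<lambda>_. {..<m}) bs) j = bs j"
  using assms by (auto simp: rcol_def ridx_def uncurry_on_def rightC_def PiE_iff
      extensional_def fun_eq_iff)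

text \<open>The contraction of a PEPS is a chain over its columns: factor \<open>j\<close> is the column tensor with
  physical index \<open>xcol m x j\<close>, the last factor is the last column \<open>L\<close> (whose right bond is
  trivial), and the bonds of the chain are the vectors of horizontal bonds between consecutive
  columns.\<close>

lemma contraction_with_as_chain:
  assumes n: "1 \<le> n"
  shows "contraction_with m n U A L x
    = chain (col_factors n A L) (rightC m n U) (zero_bonds m) n (phys_cols m n x) (zero_bonds m)"
proof -
  let ?F = "col_factors n A L" and ?z = "zero_bonds m"
  have n_eq: "n = Suc (n - 1)"
    using n by simp
  have factor: "(\<Prod>j<Suc (n - 1). ?F j (phys_cols m n x j) (if j = 0 then ?z else bs (j - 1))
        (if j < n - 1 then bs j else ?z))
      = (\<Prod>j<n - 1. A j (xcol m x j) (lcol m (uncurry_on {..<n - 1} (\<lambda>_. {..<m}) bs) j)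
                       (rcol m n (uncurry_on {..<n - 1} (\<lambda>_. {..<m}) bs) j))
        * L (xcol m x (n - 1)) (lcol m (uncurry_on {..<n - 1} (\<lambda>_. {..<m}) bs) (n - 1))"
    if bs: "bs \<in> Pi\<^sub>E {..<n - 1} (rightC m n U)" for bs
  proof -
    let ?h = "uncurry_on {..<n - 1} (\<lambda>_. {..<m}) bs"
    let ?G = "\<lambda>j. ?F j (phys_cols m n x j) (if j = 0 then ?z else bs (j - 1))
      (if j < n - 1 then bs j else ?z)"
    have "?G j = A j (xcol m x j) (lcol m ?h j) (rcol m n ?h j)" if j: "j < n - 1" for j
    proof -
      have "j < n"
        using j by simp
      then show ?thesis
        unfolding lcol_uncurry_on[OF bs \<open>j < n\<close>] rcol_uncurry_on[OF bs j] using j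
        by (simp add: col_factors_def phys_cols_def)
    qed
    then have "(\<Prod>j<n - 1. ?G j) = (\<Prod>j<n - 1. A j (xcol m x j) (lcol m ?h j) (rcol m n ?h j))"
      by (intro prod.cong refl) simp
    moreover have "?G (n - 1) = L (xcol m x (n - 1)) (lcol m ?h (n - 1))"
    proof -
      have "n - 1 < n"
        using n by simp
      then show ?thesis
        unfolding lcol_uncurry_on[OF bs \<open>n - 1 < n\<close>] by (simp add: col_factors_def phys_cols_def)
    qed
    ultimately show ?thesis
      by (simp only: prod.lessThan_Suc)
  qed
  have "chain ?F (rightC m n U) ?z n (phys_cols m n x) ?z
      = (\<Sum>bs\<in>Pi\<^sub>E {..<n - 1} (rightC m n U). \<Prod>j<Suc (n - 1). ?F j (phys_cols m n x j)
           (if j = 0 then ?z else bs (j - 1)) (if j < n - 1 then bs j else ?z))"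
    by (metis chain_explicit n_eq)
  then show ?thesis
    unfolding contraction_with_def sum_hbonds_by_columns
    by (simp only:) (intro sum.cong refl, simp only: factor)
qed

text \<open>The last column is in turn a chain over its nodes; node \<open>i\<close> carries the pair of its
  physical index and its left bond as physical index, and its vertical bonds as chain bonds.\<close>

definition node_factors :: "(nat \<Rightarrow> nat \<Rightarrow> nat \<Rightarrow> nat \<Rightarrow> nat \<Rightarrow> nat \<Rightarrow> real) \<Rightarrow>
    nat \<Rightarrow> nat \<times> nat \<Rightarrow> nat \<Rightarrow> nat \<Rightarrow> real" where
  "node_factors G i pl u d = G i (fst pl) (snd pl) 0 u d"

definition node_phys :: "nat \<Rightarrow> peps \<Rightarrow> nat \<Rightarrow> (nat \<times> nat) set" where
  "node_phys n U i = {..<phys U i (n - 1)} \<times> {..<ldim U i (n - 1)}"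

definition node_dbonds :: "nat \<Rightarrow> nat \<Rightarrow> peps \<Rightarrow> nat \<Rightarrow> nat set" where
  "node_dbonds m n U i = {..<ddim m U i (n - 1)}"

definition pair_rows :: "nat \<Rightarrow> (nat \<Rightarrow> nat) \<Rightarrow> (nat \<Rightarrow> nat) \<Rightarrow> nat \<Rightarrow> nat \<times> nat" where
  "pair_rows m p c = (\<lambda>i\<in>{..<m}. (p i, c i))"

lemma finite_node_phys [simp]: "finite (node_phys n U i)"
  by (simp add: node_phys_def)

lemma finite_node_dbonds [simp]: "finite (node_dbonds m n U i)"
  by (simp add: node_dbonds_def)

lemma last_col_with_as_chain:
  assumes m: "1 \<le> m"
  shows "last_col_with m n U G xc l = chain (node_factors G) (node_dbonds m n U) 0 m (pair_rows m xc l) 0"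
proof -
  have m_eq: "m = Suc (m - 1)"
    using m by simp
  have bonds: "vbonds_col m U (n - 1) = Pi\<^sub>E {..<m - 1} (node_dbonds m n U)"
    unfolding vbonds_col_def node_dbonds_def by (rule PiE_cong) (auto simp: ddim_def)
  have "chain (node_factors G) (node_dbonds m n U) 0 m (pair_rows m xc l) 0
      = (\<Sum>bs\<in>Pi\<^sub>E {..<m - 1} (node_dbonds m n U). \<Prod>i<Suc (m - 1).
           node_factors G i (pair_rows m xc l i) (if i = 0 then 0 else bs (i - 1)) (if i < m - 1 then bs i else 0))"
    by (metis chain_explicit m_eq)
  also have "\<dots> = last_col_with m n U G xc l"
    unfolding last_col_with_def bonds
  proof (intro sum.cong refl)
    fix bs
    have "(i < m - 1) = (i + 1 < m)" for i
      by auto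
    then show "(\<Prod>i<Suc (m - 1). node_factors G i (pair_rows m xc l i) (if i = 0 then 0 else bs (i - 1))
          (if i < m - 1 then bs i else 0)) = (\<Prod>i<m. G i (xc i) (l i) 0 (cu bs i) (cd m bs i))"
      unfolding m_eq[symmetric]
      by (intro prod.cong refl) (simp add: node_factors_def pair_rows_def cu_def cd_def)
  qed
  finally show ?thesis ..
qed

lemma sum_physIdx_phys_cols:
  "(\<Sum>x\<in>physIdx m n U. f (phys_cols m n x)) = (\<Sum>X\<in>Pi\<^sub>E {..<n} (physC m U). f X)"
proof -
  have "physIdx m n U = Pi\<^sub>E {(i, j). j \<in> {..<n} \<and> i \<in> {..<m}} (\<lambda>(i, j). {..<phys U i j})"
    unfolding physIdx_def by (rule arg_cong2[where f=PiE]) auto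
  moreover have "Pi\<^sub>E {..<n} (\<lambda>j. Pi\<^sub>E {..<m} (\<lambda>i. {..<phys U i j})) = Pi\<^sub>E {..<n} (physC m U)"
    unfolding physC_def ..
  moreover have "phys_cols m n (uncurry_on {..<n} (\<lambda>_. {..<m}) X) = X"
    if "X \<in> Pi\<^sub>E {..<n} (physC m U)" for X
    using that by (auto simp: phys_cols_def xcol_def uncurry_on_def physC_def PiE_iff
        extensional_def fun_eq_iff)
  ultimately show ?thesis
    by (simp only: sum_PiE_uncurry_on) (simp cong: sum.cong)
qed

lemma sum_pair_rows:
  "(\<Sum>p\<in>physC m U (n - 1). \<Sum>c\<in>leftC m U (n - 1). f (pair_rows m p c))
     = (\<Sum>q\<in>Pi\<^sub>E {..<m} (node_phys n U). f q)"
proof -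
  have "(\<Sum>p\<in>physC m U (n - 1). \<Sum>c\<in>leftC m U (n - 1). f (pair_rows m p c))
      = (\<Sum>(p, c)\<in>physC m U (n - 1) \<times> leftC m U (n - 1). f (pair_rows m p c))"
    by (rule sum.cartesian_product)
  also have "\<dots> = (\<Sum>q\<in>Pi\<^sub>E {..<m} (node_phys n U). f q)"
  proof (rule sum.reindex_bij_witness[of _ "\<lambda>q. (\<lambda>i\<in>{..<m}. fst (q i), \<lambda>i\<in>{..<m}. snd (q i))"
        "\<lambda>(p, c). pair_rows m p c"])
    fix a assume "a \<in> physC m U (n - 1) \<times> leftC m U (n - 1)"
    then obtain p c where a: "a = (p, c)" "p \<in> physC m U (n - 1)" "c \<in> leftC m U (n - 1)"
      by blast
    then show "(\<lambda>i\<in>{..<m}. fst ((case a of (p, c) \<Rightarrow> pair_rows m p c) i),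
          \<lambda>i\<in>{..<m}. snd ((case a of (p, c) \<Rightarrow> pair_rows m p c) i)) = a"
      by (auto simp: pair_rows_def physC_def leftC_def PiE_iff extensional_def fun_eq_iff)
    show "(case a of (p, c) \<Rightarrow> pair_rows m p c) \<in> Pi\<^sub>E {..<m} (node_phys n U)"
      using a by (auto simp: pair_rows_def physC_def leftC_def node_phys_def PiE_iff)
  next
    fix q assume q: "q \<in> Pi\<^sub>E {..<m} (node_phys n U)"
    then show "(case (\<lambda>i\<in>{..<m}. fst (q i), \<lambda>i\<in>{..<m}. snd (q i)) of (p, c) \<Rightarrow> pair_rows m p c) = q"
      by (auto simp: pair_rows_def PiE_iff extensional_def fun_eq_iff)
    show "(\<lambda>i\<in>{..<m}. fst (q i), \<lambda>i\<in>{..<m}. snd (q i)) \<in> physC m U (n - 1) \<times> leftC m U (n - 1)"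
      using q by (auto simp: physC_def leftC_def node_phys_def PiE_iff mem_Times_iff)
  qed auto
  finally show ?thesis .
qed

lemma tensor_norm_contraction_with:
  assumes "1 \<le> n"
  shows "tensor_norm m n U (contraction_with m n U A L) = sqrt (\<Sum>X\<in>Pi\<^sub>E {..<n} (physC m U).
      (chain (col_factors n A L) (rightC m n U) (zero_bonds m) n X (zero_bonds m))\<^sup>2)"
  unfolding tensor_norm_def contraction_with_as_chain[OF assms]
  by (rule arg_cong[where f=sqrt], rule sum_physIdx_phys_cols)

lemma sum_sq_last_col_with:
  assumes "1 \<le> m"
  shows "(\<Sum>p\<in>physC m U (n - 1). \<Sum>c\<in>leftC m U (n - 1). (last_col_with m n U G p c)\<^sup>2)
    = (\<Sum>q\<in>Pi\<^sub>E {..<m} (node_phys n U). (chain (node_factors G) (node_dbonds m n U) 0 m q 0)\<^sup>2)"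
  unfolding last_col_with_as_chain[OF assms] by (rule sum_pair_rows)

lemma leftC_0: "leftC m U 0 = {zero_bonds m}"
  unfolding leftC_def zero_bonds_def by (subst PiE_eq_singleton) (auto simp: ldim_def)

lemma chain_bonds_rightC:
  assumes "j < n"
  shows "chain_bonds (rightC m n U) (zero_bonds m) j = leftC m U j"
proof (cases "j = 0")
  case True
  then show ?thesis
    by (simp add: chain_bonds_def leftC_0)
next
  case False
  then show ?thesis
    using assms unfolding chain_bonds_def rightC_def leftC_def
    by (simp, intro PiE_cong) (auto simp: rdim_def ldim_def)
qed

lemma rightC_last: "1 \<le> n \<Longrightarrow> rightC m n U (n - 1) = {zero_bonds m}"
  unfolding rightC_def zero_bonds_def by (subst PiE_eq_singleton) (auto simp: rdim_def)

lemma chain_bonds_node_dbonds: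
  "i < m \<Longrightarrow> chain_bonds (node_dbonds m n U) 0 i = {..<udim U i (n - 1)}"
  by (cases "i = 0") (auto simp: chain_bonds_def node_dbonds_def udim_def ddim_def)

lemma node_dbonds_last: "1 \<le> m \<Longrightarrow> node_dbonds m n U (m - 1) = {0}"
  by (auto simp: node_dbonds_def ddim_def)

lemma sum_sq_node_factors:
  assumes "i < m" and "1 \<le> n"
  shows "(\<Sum>pl\<in>node_phys n U i. \<Sum>u\<in>chain_bonds (node_dbonds m n U) 0 i. \<Sum>d\<in>node_dbonds m n U i.
      (node_factors G i pl u d)\<^sup>2) = (nshape_norm m n U i (n - 1) (G i))\<^sup>2"
  using assms
  by (simp add: nshape_norm_def sum_nonneg node_phys_def node_factors_def node_dbonds_def
      chain_bonds_node_dbonds rdim_def sum.cartesian_product')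

lemma left_isometric_col_factors:
  assumes "col_canonical m n U" and "j < n - 1"
  shows "left_isometric (col_factors n (\<lambda>j. col_tensor m n U j) L) (physC m U) (rightC m n U)
    (zero_bonds m) j"
  using assms chain_bonds_rightC[of j n m U]
  by (simp add: left_isometric_def col_canonical_def col_factors_def)

lemma left_isometric_last_nodes:
  assumes "last_canonical m n U" and "i < m - 1"
  shows "left_isometric (node_factors (last_nodes n U)) (node_phys n U) (node_dbonds m n U) 0 i"
  unfolding left_isometric_def
proof (intro ballI)
  fix d d' assume "d \<in> node_dbonds m n U i" "d' \<in> node_dbonds m n U i"
  then have "d < vdim U i (n - 1)" "d' < vdim U i (n - 1)"
    using assms(2) by (auto simp: node_dbonds_def ddim_def split: if_splits)
  then show "(\<Sum>pl\<in>node_phys n U i. \<Sum>u\<in>chain_bonds (node_dbonds m n U) 0 i.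
      node_factors (last_nodes n U) i pl u d * node_factors (last_nodes n U) i pl u d')
      = (if d = d' then 1 else 0)"
    using assms chain_bonds_node_dbonds[of i m n U]
    by (simp add: last_canonical_def node_phys_def node_factors_def last_nodes_def sum.cartesian_product')
qed

section \<open>The second-order remainder\<close>

lemma abs_bilinear_remainder_le:
  fixes P Q S L L0 V e :: real
  assumes "\<bar>P - Q - S\<bar> \<le> \<alpha> * e\<^sup>2" "\<bar>L\<bar> \<le> \<beta>" "\<bar>S\<bar> \<le> \<gamma> * e" "\<bar>L - L0\<bar> \<le> \<eta> * e"
    and "\<bar>Q\<bar> \<le> \<kappa>" "\<bar>L - L0 - V\<bar> \<le> \<mu> * e\<^sup>2" "0 \<le> e"
  shows "\<bar>P * L - Q * L0 - S * L0 - Q * V\<bar> \<le> (\<alpha> * \<beta> + \<gamma> * \<eta> + \<kappa> * \<mu>) * e\<^sup>2"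
proof -
  have "P * L - Q * L0 - S * L0 - Q * V = (P - Q - S) * L + S * (L - L0) + Q * (L - L0 - V)"
    by (simp add: algebra_simps)
  also have "\<bar>\<dots>\<bar> \<le> (\<alpha> * e\<^sup>2) * \<beta> + (\<gamma> * e) * (\<eta> * e) + \<kappa> * (\<mu> * e\<^sup>2)"
    using assms by (intro order_trans[OF abs_triangle_ineq] add_mono)
      (auto simp: abs_mult intro!: mult_mono order_trans[OF abs_triangle_ineq])
  finally show ?thesis
    by (simp add: algebra_simps power2_eq_square)
qed

lemma abs_prod_sum_remainder_le:
  fixes a d :: "'h \<Rightarrow> 'j \<Rightarrow> real" and nn dl :: "'h \<Rightarrow> 'v \<Rightarrow> 'i \<Rightarrow> real"
  assumes fin: "finite H" "finite J" "finite I"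
    and a_le: "\<And>h j. h \<in> H \<Longrightarrow> j \<in> J \<Longrightarrow> \<bar>a h j\<bar> \<le> cA j"
    and d_le: "\<And>h j. h \<in> H \<Longrightarrow> j \<in> J \<Longrightarrow> \<bar>d h j\<bar> \<le> e * cA j"
    and nn_le: "\<And>h v i. h \<in> H \<Longrightarrow> v \<in> W \<Longrightarrow> i \<in> I \<Longrightarrow> \<bar>nn h v i\<bar> \<le> cN i"
    and dl_le: "\<And>h v i. h \<in> H \<Longrightarrow> v \<in> W \<Longrightarrow> i \<in> I \<Longrightarrow> \<bar>dl h v i\<bar> \<le> e * cN i"
    and e: "0 \<le> e" "e \<le> 1"
  defines "Cp \<equiv> \<Prod>j\<in>J. cA j" and "Cv \<equiv> \<Prod>i\<in>I. cN i"
    and "N \<equiv> real (card J)" and "M \<equiv> real (card I)" and "NW \<equiv> real (card W)"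
  shows "\<bar>\<Sum>h\<in>H. (\<Prod>j\<in>J. a h j + d h j) * (\<Sum>v\<in>W. \<Prod>i\<in>I. nn h v i + dl h v i)
            - (\<Prod>j\<in>J. a h j) * (\<Sum>v\<in>W. \<Prod>i\<in>I. nn h v i)
            - first_order J (a h) (d h) * (\<Sum>v\<in>W. \<Prod>i\<in>I. nn h v i)
            - (\<Prod>j\<in>J. a h j) * (\<Sum>v\<in>W. first_order I (nn h v) (dl h v))\<bar>
    \<le> real (card H) * ((N\<^sup>2 * 2 ^ card J * Cp) * (NW * 2 ^ card I * Cv)
        + (N * Cp) * (NW * (M + M\<^sup>2 * 2 ^ card I) * Cv) + Cp * (NW * M\<^sup>2 * 2 ^ card I * Cv)) * e\<^sup>2"
  unfolding mult.assoc[of "real (card H)"]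
proof (rule abs_sum_le_card_mult)
  fix h assume h: "h \<in> H"
  have hor: "\<bar>\<Prod>j\<in>J. a h j\<bar> \<le> Cp" "\<bar>first_order J (a h) (d h)\<bar> \<le> N * Cp * e"
      "\<bar>(\<Prod>j\<in>J. a h j + d h j) - (\<Prod>j\<in>J. a h j) - first_order J (a h) (d h)\<bar>
         \<le> N\<^sup>2 * 2 ^ card J * Cp * e\<^sup>2"
    using prod_add_expansion_bounds(1,3,4)[of J "a h" cA "d h" e, folded Cp_def N_def]
      fin a_le[OF h] d_le[OF h] e by auto
  have ver: "\<bar>\<Prod>i\<in>I. nn h v i + dl h v i\<bar> \<le> 2 ^ card I * Cv"
      "\<bar>(\<Prod>i\<in>I. nn h v i + dl h v i) - (\<Prod>i\<in>I. nn h v i) - first_order I (nn h v) (dl h v)\<bar>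
         \<le> M\<^sup>2 * 2 ^ card I * Cv * e\<^sup>2"
      "\<bar>(\<Prod>i\<in>I. nn h v i + dl h v i) - (\<Prod>i\<in>I. nn h v i)\<bar> \<le> (M + M\<^sup>2 * 2 ^ card I) * Cv * e"
    if v: "v \<in> W" for v
    using prod_add_expansion_bounds(2,4,5)[of I "nn h v" cN "dl h v" e, folded Cv_def M_def]
      fin nn_le[OF h v] dl_le[OF h v] e by auto
  have L: "\<bar>\<Sum>v\<in>W. \<Prod>i\<in>I. nn h v i + dl h v i\<bar> \<le> NW * 2 ^ card I * Cv"
    using abs_sum_le_card_mult[of W _ "2 ^ card I * Cv"] ver(1) unfolding NW_def by (simp add: mult.assoc)
  have Ldiff: "\<bar>(\<Sum>v\<in>W. \<Prod>i\<in>I. nn h v i + dl h v i) - (\<Sum>v\<in>W. \<Prod>i\<in>I. nn h v i)\<bar>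
      \<le> NW * (M + M\<^sup>2 * 2 ^ card I) * Cv * e"
    using abs_sum_le_card_mult[of W _ "(M + M\<^sup>2 * 2 ^ card I) * Cv * e"] ver(3)
    unfolding NW_def sum_subtractf[symmetric] by (simp add: mult.assoc)
  have Lrem: "\<bar>(\<Sum>v\<in>W. \<Prod>i\<in>I. nn h v i + dl h v i) - (\<Sum>v\<in>W. \<Prod>i\<in>I. nn h v i)
      - (\<Sum>v\<in>W. first_order I (nn h v) (dl h v))\<bar> \<le> NW * M\<^sup>2 * 2 ^ card I * Cv * e\<^sup>2"
    using abs_sum_le_card_mult[of W _ "M\<^sup>2 * 2 ^ card I * Cv * e\<^sup>2"] ver(2)
    unfolding NW_def sum_subtractf[symmetric] by (simp add: mult.assoc)
  show "\<bar>(\<Prod>j\<in>J. a h j + d h j) * (\<Sum>v\<in>W. \<Prod>i\<in>I. nn h v i + dl h v i)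
            - (\<Prod>j\<in>J. a h j) * (\<Sum>v\<in>W. \<Prod>i\<in>I. nn h v i)
            - first_order J (a h) (d h) * (\<Sum>v\<in>W. \<Prod>i\<in>I. nn h v i)
            - (\<Prod>j\<in>J. a h j) * (\<Sum>v\<in>W. first_order I (nn h v) (dl h v))\<bar>
    \<le> ((N\<^sup>2 * 2 ^ card J * Cp) * (NW * 2 ^ card I * Cv)
        + (N * Cp) * (NW * (M + M\<^sup>2 * 2 ^ card I) * Cv) + Cp * (NW * M\<^sup>2 * 2 ^ card I * Cv)) * e\<^sup>2"
    by (rule abs_bilinear_remainder_le[OF hor(3) L hor(2) Ldiff hor(1) Lrem e(1)])
qed

section \<open>Canonical form\<close>

context
  fixes m n :: nat and U :: peps
  assumes n: "1 \<le> n" and cc: "col_canonical m n U"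
begin

lemma sum_sq_chain_canonical_cols:
  "(\<Sum>X\<in>Pi\<^sub>E {..<n} (physC m U).
      (chain (col_factors n (\<lambda>j. col_tensor m n U j) V) (rightC m n U) (zero_bonds m) n X (zero_bonds m))\<^sup>2)
    = (\<Sum>p\<in>physC m U (n - 1). \<Sum>c\<in>leftC m U (n - 1). (V p c)\<^sup>2)"
proof -
  let ?F = "col_factors n (\<lambda>j. col_tensor m n U j) V"
  have n_eq: "n = (n - 1) + 1"
    using n by simp
  have "(\<Sum>X\<in>Pi\<^sub>E {..<(n - 1) + 1} (physC m U).
          (chain ?F (rightC m n U) (zero_bonds m) ((n - 1) + 1) X (zero_bonds m))\<^sup>2)
      = (\<Sum>w\<in>Pi\<^sub>E {..<1} (shift (physC m U) (n - 1)). \<Sum>c\<in>chain_bonds (rightC m n U) (zero_bonds m) (n - 1).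
          (chain (shift ?F (n - 1)) (shift (rightC m n U) (n - 1)) c 1 w (zero_bonds m))\<^sup>2)"
    by (rule chain_sq_norm_isometric_prefix) (simp_all add: left_isometric_col_factors[OF cc])
  also have "\<dots> = (\<Sum>w\<in>Pi\<^sub>E {..<Suc 0} (shift (physC m U) (n - 1)). \<Sum>c\<in>leftC m U (n - 1). (V (w 0) c)\<^sup>2)"
    using n by (simp only: One_nat_def chain_1) (simp add: chain_bonds_rightC shift_def col_factors_def)
  also have "\<dots> = (\<Sum>p\<in>physC m U (n - 1). \<Sum>c\<in>leftC m U (n - 1). (V p c)\<^sup>2)"
    by (subst sum_PiE_lessThan_1) (simp add: shift_def)
  finally show ?thesis
    by (simp only: n_eq[symmetric])
qed

lemma tensor_norm_contraction_with_canonical: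
  "tensor_norm m n U (contraction_with m n U (\<lambda>j. col_tensor m n U j) V)
    = sqrt (\<Sum>p\<in>physC m U (n - 1). \<Sum>c\<in>leftC m U (n - 1). (V p c)\<^sup>2)"
  by (simp only: tensor_norm_contraction_with[OF n] sum_sq_chain_canonical_cols)

lemma col_factors_fun_upd: "k < n - 1 \<Longrightarrow> col_factors n (A(k := D)) L = (col_factors n A L)(k := D)"
  by (auto simp: col_factors_def fun_eq_iff)

text \<open>Replacing the column tensor \<open>k\<close> by \<open>D\<close>: the columns to its left are isometries, and
  the contraction of those to its right has norm at most that of the whole network.\<close>

lemma tensor_norm_col_update_le:
  assumes k: "k < n - 1"
  shows "tensor_norm m n U (contraction_with m n U ((\<lambda>j. col_tensor m n U j)(k := D)) V)
    \<le> cshape_norm m n U k D * tensor_norm m n U (contraction_with m n U (\<lambda>j. col_tensor m n U j) V)"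
proof -
  let ?F = "col_factors n (\<lambda>j. col_tensor m n U j) V"
  let ?z = "zero_bonds m"
  let ?R = "\<lambda>w d. chain (shift ?F (Suc k)) (shift (rightC m n U) (Suc k)) d (n - 1 - k) w ?z"
  have n_eq: "n = k + Suc (n - 1 - k)" "n = Suc k + (n - 1 - k)"
    using k by auto
  have "(\<Sum>X\<in>Pi\<^sub>E {..<Suc k + (n - 1 - k)} (physC m U).
          (chain ?F (rightC m n U) ?z (Suc k + (n - 1 - k)) X ?z)\<^sup>2)
      = (\<Sum>w\<in>Pi\<^sub>E {..<n - 1 - k} (shift (physC m U) (Suc k)).
          \<Sum>d\<in>chain_bonds (rightC m n U) ?z (Suc k). (?R w d)\<^sup>2)"
    by (rule chain_sq_norm_isometric_prefix) (use k in \<open>auto simp: left_isometric_col_factors[OF cc]\<close>)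
  then have right: "(\<Sum>w\<in>Pi\<^sub>E {..<n - 1 - k} (shift (physC m U) (Suc k)). \<Sum>d\<in>rightC m n U k. (?R w d)\<^sup>2)
      = (\<Sum>X\<in>Pi\<^sub>E {..<n} (physC m U). (chain ?F (rightC m n U) ?z n X ?z)\<^sup>2)"
    by (simp only: n_eq(2)[symmetric]) (simp add: chain_bonds_def)
  have "(\<Sum>X\<in>Pi\<^sub>E {..<n} (physC m U). (chain (?F(k := D)) (rightC m n U) ?z n X ?z)\<^sup>2)
      \<le> (\<Sum>p\<in>physC m U k. \<Sum>c\<in>chain_bonds (rightC m n U) ?z k. \<Sum>d\<in>rightC m n U k. (D p c d)\<^sup>2)
         * (\<Sum>w\<in>Pi\<^sub>E {..<n - 1 - k} (shift (physC m U) (Suc k)). \<Sum>d\<in>rightC m n U k. (?R w d)\<^sup>2)"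
    using chain_sq_norm_update_le[of "rightC m n U" "physC m U" k ?F ?z ?z "n - 1 - k" D]
      left_isometric_col_factors[OF cc] k rightC_last[OF n]
    by (simp add: n_eq(1)[symmetric])
  also have "\<dots> = (cshape_norm m n U k D)\<^sup>2
      * (\<Sum>X\<in>Pi\<^sub>E {..<n} (physC m U). (chain ?F (rightC m n U) ?z n X ?z)\<^sup>2)"
    using k by (simp only: right) (simp add: chain_bonds_rightC cshape_norm_def sum_nonneg)
  finally have "sqrt (\<Sum>X\<in>Pi\<^sub>E {..<n} (physC m U). (chain (?F(k := D)) (rightC m n U) ?z n X ?z)\<^sup>2)
      \<le> sqrt ((cshape_norm m n U k D)\<^sup>2
          * (\<Sum>X\<in>Pi\<^sub>E {..<n} (physC m U). (chain ?F (rightC m n U) ?z n X ?z)\<^sup>2))"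
    by (rule real_sqrt_le_mono)
  then show ?thesis
    unfolding tensor_norm_contraction_with[OF n] col_factors_fun_upd[OF k]
    by (simp add: real_sqrt_mult cshape_norm_nonneg)
qed

lemma cshape_norm_canonical:
  assumes "k < n - 1"
  shows "(cshape_norm m n U k (col_tensor m n U k))\<^sup>2 = real (card (rightC m n U k))"
proof -
  have "(cshape_norm m n U k (col_tensor m n U k))\<^sup>2
      = (\<Sum>x\<in>physC m U k. \<Sum>l\<in>leftC m U k. \<Sum>r\<in>rightC m n U k. (col_tensor m n U k x l r)\<^sup>2)"
    unfolding cshape_norm_def by (simp add: sum_nonneg)
  also have "\<dots> = (\<Sum>r\<in>rightC m n U k. \<Sum>x\<in>physC m U k. \<Sum>l\<in>leftC m U k.
           col_tensor m n U k x l r * col_tensor m n U k x l r)"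
    by (simp only: power2_eq_square, rule trans[OF sum_swap3 sum_swap3])
  also have "\<dots> = (\<Sum>r\<in>rightC m n U k. 1)"
    using cc assms unfolding col_canonical_def by (intro sum.cong refl) simp
  finally show ?thesis
    by simp
qed

end

definition last_sq_norm :: "nat \<Rightarrow> nat \<Rightarrow> peps \<Rightarrow> (nat \<Rightarrow> nat \<Rightarrow> nat \<Rightarrow> nat \<Rightarrow> nat \<Rightarrow> nat \<Rightarrow> real) \<Rightarrow> real" where
  "last_sq_norm m n U G
     = (\<Sum>q\<in>Pi\<^sub>E {..<m} (node_phys n U). (chain (node_factors G) (node_dbonds m n U) 0 m q 0)\<^sup>2)"

lemma node_factors_fun_upd:
  "node_factors (G(i := D)) = (node_factors G)(i := (\<lambda>pl u d. D (fst pl) (snd pl) 0 u d))"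
  by (auto simp: node_factors_def fun_eq_iff)

context
  fixes m n :: nat and U :: peps
  assumes m: "1 \<le> m" and n: "1 \<le> n" and lc: "last_canonical m n U"
begin

lemma last_sq_norm_node_update_le:
  assumes i: "i < m"
  shows "last_sq_norm m n U ((last_nodes n U)(i := D))
    \<le> (nshape_norm m n U i (n - 1) D)\<^sup>2 * (if i < m - 1 then last_sq_norm m n U (last_nodes n U) else 1)"
proof -
  let ?F = "node_factors (last_nodes n U)" and ?B = "node_dbonds m n U" and ?P = "node_phys n U"
  let ?D = "\<lambda>pl u d. D (fst pl) (snd pl) 0 u d"
  let ?R = "\<lambda>w d. chain (shift ?F (Suc i)) (shift ?B (Suc i)) d (m - 1 - i) w 0"
  have m_eq: "m = i + Suc (m - 1 - i)" "m = Suc i + (m - 1 - i)"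
    using i by auto
  have "last_sq_norm m n U ((last_nodes n U)(i := D))
      \<le> (\<Sum>pl\<in>?P i. \<Sum>c\<in>chain_bonds ?B 0 i. \<Sum>d\<in>?B i. (?D pl c d)\<^sup>2)
         * (\<Sum>w\<in>Pi\<^sub>E {..<m - 1 - i} (shift ?P (Suc i)). \<Sum>d\<in>?B i. (?R w d)\<^sup>2)"
    using chain_sq_norm_update_le[of ?B ?P i ?F 0 0 "m - 1 - i" ?D] left_isometric_last_nodes[OF lc]
      node_dbonds_last[OF m] i
    unfolding last_sq_norm_def node_factors_fun_upd by (simp add: m_eq(1)[symmetric])
  also have "(\<Sum>pl\<in>?P i. \<Sum>c\<in>chain_bonds ?B 0 i. \<Sum>d\<in>?B i. (?D pl c d)\<^sup>2) = (nshape_norm m n U i (n - 1) D)\<^sup>2"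
    using sum_sq_node_factors[OF i n, of "(last_nodes n U)(i := D)"] by (simp add: node_factors_def)
  also have "(\<Sum>w\<in>Pi\<^sub>E {..<m - 1 - i} (shift ?P (Suc i)). \<Sum>d\<in>?B i. (?R w d)\<^sup>2)
      = (if i < m - 1 then last_sq_norm m n U (last_nodes n U) else 1)"
  proof (cases "i < m - 1")
    case True
    have "(\<Sum>q\<in>Pi\<^sub>E {..<Suc i + (m - 1 - i)} ?P. (chain ?F ?B 0 (Suc i + (m - 1 - i)) q 0)\<^sup>2)
        = (\<Sum>w\<in>Pi\<^sub>E {..<m - 1 - i} (shift ?P (Suc i)). \<Sum>d\<in>chain_bonds ?B 0 (Suc i). (?R w d)\<^sup>2)"
      by (rule chain_sq_norm_isometric_prefix) (use True in \<open>auto simp: left_isometric_last_nodes[OF lc]\<close>)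
    then show ?thesis
      using True unfolding last_sq_norm_def by (simp only: m_eq(2)[symmetric]) (simp add: chain_bonds_def)
  next
    case False
    then have "i = m - 1"
      using i by simp
    then show ?thesis
      using node_dbonds_last[OF m] by simp
  qed
  finally show ?thesis .
qed

lemma last_sq_norm_last_nodes:
  "last_sq_norm m n U (last_nodes n U) = (nshape_norm m n U (m - 1) (n - 1) (node U (m - 1) (n - 1)))\<^sup>2"
proof -
  let ?F = "node_factors (last_nodes n U)" and ?B = "node_dbonds m n U" and ?P = "node_phys n U"
  have m_eq: "m = (m - 1) + 1"
    using m by simp
  have "(\<Sum>q\<in>Pi\<^sub>E {..<(m - 1) + 1} ?P. (chain ?F ?B 0 ((m - 1) + 1) q 0)\<^sup>2)
      = (\<Sum>w\<in>Pi\<^sub>E {..<1} (shift ?P (m - 1)). \<Sum>c\<in>chain_bonds ?B 0 (m - 1).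
           (chain (shift ?F (m - 1)) (shift ?B (m - 1)) c 1 w 0)\<^sup>2)"
    by (rule chain_sq_norm_isometric_prefix) (simp_all add: left_isometric_last_nodes[OF lc])
  also have "\<dots> = (\<Sum>w\<in>Pi\<^sub>E {..<Suc 0} (shift ?P (m - 1)). \<Sum>c\<in>chain_bonds ?B 0 (m - 1).
                    (?F (m - 1) (w 0) c 0)\<^sup>2)"
    by (simp only: One_nat_def chain_1) (simp add: shift_def)
  also have "\<dots> = (\<Sum>pl\<in>?P (m - 1). \<Sum>c\<in>chain_bonds ?B 0 (m - 1). \<Sum>d\<in>?B (m - 1). (?F (m - 1) pl c d)\<^sup>2)"
    by (subst sum_PiE_lessThan_1) (simp add: shift_def node_dbonds_last[OF m, simplified])
  also have "\<dots> = (nshape_norm m n U (m - 1) (n - 1) (node U (m - 1) (n - 1)))\<^sup>2"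
    using sum_sq_node_factors[where i="m - 1" and G="last_nodes n U"] m n by (simp add: last_nodes_def)
  finally show ?thesis
    unfolding last_sq_norm_def by (simp only: m_eq[symmetric])
qed

lemma nshape_norm_canonical:
  assumes i: "i < m - 1"
  shows "(nshape_norm m n U i (n - 1) (node U i (n - 1)))\<^sup>2 = real (vdim U i (n - 1))"
proof -
  let ?F = "node_factors (last_nodes n U)" and ?B = "node_dbonds m n U" and ?P = "node_phys n U"
  have "(nshape_norm m n U i (n - 1) (node U i (n - 1)))\<^sup>2
      = (\<Sum>pl\<in>?P i. \<Sum>u\<in>chain_bonds ?B 0 i. \<Sum>d\<in>?B i. (?F i pl u d)\<^sup>2)"
    using sum_sq_node_factors[where i=i and G="last_nodes n U"] i n by (simp add: last_nodes_def)
  also have "\<dots> = (\<Sum>d\<in>?B i. \<Sum>pl\<in>?P i. \<Sum>u\<in>chain_bonds ?B 0 i. ?F i pl u d * ?F i pl u d)"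
    by (simp only: power2_eq_square, rule trans[OF sum_swap3 sum_swap3])
  also have "\<dots> = (\<Sum>d\<in>?B i. 1)"
    using left_isometric_last_nodes[OF lc i] unfolding left_isometric_def by (intro sum.cong refl) simp
  also have "\<dots> = real (vdim U i (n - 1))"
    using i by (simp add: node_dbonds_def ddim_def less_diff_conv)
  finally show ?thesis .
qed

end

definition first_order_col :: "nat \<Rightarrow> nat \<Rightarrow> peps \<Rightarrow>
    (nat \<Rightarrow> (nat \<Rightarrow> nat) \<Rightarrow> (nat \<Rightarrow> nat) \<Rightarrow> (nat \<Rightarrow> nat) \<Rightarrow> real) \<Rightarrow> nat \<Rightarrow> (nat \<times> nat \<Rightarrow> nat) \<Rightarrow> real" where
  "first_order_col m n U \<Delta> k = contraction_with m n U ((\<lambda>j. col_tensor m n U j)(k := \<Delta> k))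
     (last_col_with m n U (last_nodes n U))"

definition first_order_node :: "nat \<Rightarrow> nat \<Rightarrow> peps \<Rightarrow>
    (nat \<Rightarrow> nat \<Rightarrow> nat \<Rightarrow> nat \<Rightarrow> nat \<Rightarrow> nat \<Rightarrow> real) \<Rightarrow> nat \<Rightarrow> (nat \<times> nat \<Rightarrow> nat) \<Rightarrow> real" where
  "first_order_node m n U \<delta> i = contraction_with m n U (\<lambda>j. col_tensor m n U j)
     (last_col_with m n U ((last_nodes n U)(i := \<delta> i)))"

definition remainder_const :: "nat \<Rightarrow> nat \<Rightarrow> peps \<Rightarrow> real" where
  "remainder_const m n U =
    (let Cp = \<Prod>j<n - 1. cshape_norm m n U j (col_tensor m n U j);
         Cv = \<Prod>i<m. nshape_norm m n U i (n - 1) (node U i (n - 1));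
         N = real (n - 1); M = real m; NW = real (card (vbonds_col m U (n - 1)))
     in real (card (hbonds m n U)) * ((N\<^sup>2 * 2 ^ (n - 1) * Cp) * (NW * 2 ^ m * Cv)
        + (N * Cp) * (NW * (M + M\<^sup>2 * 2 ^ m) * Cv) + Cp * (NW * M\<^sup>2 * 2 ^ m * Cv)))"

lemma remainder_const_nonneg: "0 \<le> remainder_const m n U"
  unfolding remainder_const_def Let_def
  by (intro mult_nonneg_nonneg add_nonneg_nonneg prod_nonneg cshape_norm_nonneg nshape_norm_nonneg) auto

lemma sum_first_order_col_eq:
  "(\<Sum>k<n - 1. first_order_col m n U \<Delta> k x) = (\<Sum>h\<in>hbonds m n U.
      first_order {..<n - 1} (\<lambda>j. col_tensor m n U j (xcol m x j) (lcol m h j) (rcol m n h j))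
        (\<lambda>j. \<Delta> j (xcol m x j) (lcol m h j) (rcol m n h j))
      * last_col_with m n U (last_nodes n U) (xcol m x (n - 1)) (lcol m h (n - 1)))"
proof -
  have "first_order_col m n U \<Delta> k x = (\<Sum>h\<in>hbonds m n U.
      (\<Prod>j<n - 1. ((\<lambda>j. col_tensor m n U j (xcol m x j) (lcol m h j) (rcol m n h j))
                      (k := \<Delta> k (xcol m x k) (lcol m h k) (rcol m n h k))) j)
      * last_col_with m n U (last_nodes n U) (xcol m x (n - 1)) (lcol m h (n - 1)))" for k
    unfolding first_order_col_def contraction_with_def
    by (intro sum.cong refl arg_cong2[where f=times] prod.cong) auto
  then show ?thesis
    by (simp only: first_order_eq_sum_fun_upd[OF finite_lessThan] sum_distrib_right) (rule sum.swap)
qed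

lemma sum_first_order_node_eq:
  "(\<Sum>i<m. first_order_node m n U \<delta> i x) = (\<Sum>h\<in>hbonds m n U.
      (\<Prod>j<n - 1. col_tensor m n U j (xcol m x j) (lcol m h j) (rcol m n h j))
      * (\<Sum>v\<in>vbonds_col m U (n - 1). first_order {..<m}
          (\<lambda>i. node U i (n - 1) (xcol m x (n - 1) i) (lcol m h (n - 1) i) 0 (cu v i) (cd m v i))
          (\<lambda>i. \<delta> i (xcol m x (n - 1) i) (lcol m h (n - 1) i) 0 (cu v i) (cd m v i))))"
proof -
  have "first_order_node m n U \<delta> i x = (\<Sum>h\<in>hbonds m n U.
      (\<Prod>j<n - 1. col_tensor m n U j (xcol m x j) (lcol m h j) (rcol m n h j))
      * (\<Sum>v\<in>vbonds_col m U (n - 1). \<Prod>i'<m.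
          ((\<lambda>i. node U i (n - 1) (xcol m x (n - 1) i) (lcol m h (n - 1) i) 0 (cu v i) (cd m v i))
            (i := \<delta> i (xcol m x (n - 1) i) (lcol m h (n - 1) i) 0 (cu v i) (cd m v i))) i'))" for i
    unfolding first_order_node_def contraction_with_def last_col_with_def last_nodes_def
    by (intro sum.cong refl arg_cong2[where f=times] prod.cong) auto
  then show ?thesis
    by (simp only: first_order_eq_sum_fun_upd[OF finite_lessThan] sum_distrib_left) (rule sum_swap3)
qed

lemma abs_pert_contraction_remainder_le:
  assumes n: "1 \<le> n" and e: "0 \<le> e" "e \<le> 1"
    and \<Delta>: "\<forall>j<n - 1. cshape_norm m n U j (\<Delta> j) \<le> e * cshape_norm m n U j (col_tensor m n U j)"
    and \<delta>: "\<forall>i<m. nshape_norm m n U i (n - 1) (\<delta> i) \<le> e * nshape_norm m n U i (n - 1) (node U i (n - 1))"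
    and x: "x \<in> physIdx m n U"
  shows "\<bar>pert_contraction m n U \<Delta> \<delta> x - contraction m n U x
      - (\<Sum>k<n - 1. first_order_col m n U \<Delta> k x) - (\<Sum>i<m. first_order_node m n U \<delta> i x)\<bar>
    \<le> remainder_const m n U * e\<^sup>2"
proof -
  define a where "a h j = col_tensor m n U j (xcol m x j) (lcol m h j) (rcol m n h j)" for h j
  define d where "d h j = \<Delta> j (xcol m x j) (lcol m h j) (rcol m n h j)" for h j
  define nn where "nn h v i = node U i (n - 1) (xcol m x (n - 1) i) (lcol m h (n - 1) i) 0 (cu v i) (cd m v i)"
    for h v i
  define dl where "dl h v i = \<delta> i (xcol m x (n - 1) i) (lcol m h (n - 1) i) 0 (cu v i) (cd m v i)" for h v i
  let ?W = "vbonds_col m U (n - 1)"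
  let ?L0 = "\<lambda>h. \<Sum>v\<in>?W. \<Prod>i<m. nn h v i"
  have pert: "pert_contraction m n U \<Delta> \<delta> x
      = (\<Sum>h\<in>hbonds m n U. (\<Prod>j<n - 1. a h j + d h j) * (\<Sum>v\<in>?W. \<Prod>i<m. nn h v i + dl h v i))"
    unfolding pert_contraction_def last_col_def a_def d_def nn_def dl_def ..
  have contr: "contraction m n U x = (\<Sum>h\<in>hbonds m n U. (\<Prod>j<n - 1. a h j) * ?L0 h)"
    unfolding contraction_eq_contraction_with[OF n] contraction_with_def last_col_with_def last_nodes_def
      a_def nn_def ..
  have cols: "(\<Sum>k<n - 1. first_order_col m n U \<Delta> k x)
      = (\<Sum>h\<in>hbonds m n U. first_order {..<n - 1} (a h) (d h) * ?L0 h)"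
    unfolding sum_first_order_col_eq last_col_with_def last_nodes_def a_def d_def nn_def ..
  have nodes: "(\<Sum>i<m. first_order_node m n U \<delta> i x)
      = (\<Sum>h\<in>hbonds m n U. (\<Prod>j<n - 1. a h j) * (\<Sum>v\<in>?W. first_order {..<m} (nn h v) (dl h v)))"
    unfolding sum_first_order_node_eq a_def nn_def dl_def ..
  have entries: "\<bar>a h j\<bar> \<le> cshape_norm m n U j (col_tensor m n U j)"
      "\<bar>d h j\<bar> \<le> e * cshape_norm m n U j (col_tensor m n U j)"
    if h: "h \<in> hbonds m n U" and j: "j \<in> {..<n - 1}" for h j
  proof -
    have "j < n"
      using j by simp
    then show "\<bar>a h j\<bar> \<le> cshape_norm m n U j (col_tensor m n U j)"
      and "\<bar>d h j\<bar> \<le> e * cshape_norm m n U j (col_tensor m n U j)"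
      unfolding a_def d_def using \<Delta> j
      by (auto intro: abs_col_entry_le[OF x h] order_trans[OF abs_col_entry_le[OF x h]])
  qed
  have node_entries: "\<bar>nn h v i\<bar> \<le> nshape_norm m n U i (n - 1) (node U i (n - 1))"
      "\<bar>dl h v i\<bar> \<le> e * nshape_norm m n U i (n - 1) (node U i (n - 1))"
    if h: "h \<in> hbonds m n U" and v: "v \<in> ?W" and i: "i \<in> {..<m}" for h v i
  proof -
    have i': "i < m"
      using i by simp
    show "\<bar>nn h v i\<bar> \<le> nshape_norm m n U i (n - 1) (node U i (n - 1))"
      unfolding nn_def by (rule abs_node_entry_le[OF x h v i' n])
    show "\<bar>dl h v i\<bar> \<le> e * nshape_norm m n U i (n - 1) (node U i (n - 1))"
      unfolding dl_def using \<delta> i' by (intro order_trans[OF abs_node_entry_le[OF x h v i' n]]) auto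
  qed
  show ?thesis
    unfolding pert contr cols nodes sum_subtractf[symmetric] remainder_const_def Let_def
    using abs_prod_sum_remainder_le[where H="hbonds m n U" and J="{..<n - 1}" and I="{..<m}"
        and W="vbonds_col m U (n - 1)"
        and a=a and d=d and nn=nn and dl=dl and e=e
        and cA="\<lambda>j. cshape_norm m n U j (col_tensor m n U j)"
        and cN="\<lambda>i. nshape_norm m n U i (n - 1) (node U i (n - 1))"]
      entries node_entries e by simp
qed

context
  fixes m n :: nat and U :: peps
  assumes m: "1 \<le> m" and n: "1 \<le> n" and cc: "col_canonical m n U" and lc: "last_canonical m n U"
begin

lemma tensor_norm_contraction_canonical:
  "tensor_norm m n U (contraction m n U) = sqrt (last_sq_norm m n U (last_nodes n U))"
  unfolding contraction_eq_contraction_with[OF n] tensor_norm_contraction_with_canonical[OF n cc]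
    sum_sq_last_col_with[OF m] last_sq_norm_def ..

lemma tensor_norm_first_order_col_le:
  "k < n - 1 \<Longrightarrow> tensor_norm m n U (first_order_col m n U \<Delta> k)
     \<le> cshape_norm m n U k (\<Delta> k) * tensor_norm m n U (contraction m n U)"
  unfolding first_order_col_def contraction_eq_contraction_with[OF n]
  by (rule tensor_norm_col_update_le[OF n cc])

lemma tensor_norm_first_order_node_le:
  assumes i: "i < m"
  shows "tensor_norm m n U (first_order_node m n U \<delta> i)
    \<le> nshape_norm m n U i (n - 1) (\<delta> i) * (if i < m - 1 then tensor_norm m n U (contraction m n U) else 1)"
proof -
  have "tensor_norm m n U (first_order_node m n U \<delta> i)
      = sqrt (last_sq_norm m n U ((last_nodes n U)(i := \<delta> i)))"
    unfolding first_order_node_def tensor_norm_contraction_with_canonical[OF n cc]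
      sum_sq_last_col_with[OF m] last_sq_norm_def ..
  also have "\<dots> \<le> sqrt ((nshape_norm m n U i (n - 1) (\<delta> i))\<^sup>2
      * (if i < m - 1 then last_sq_norm m n U (last_nodes n U) else 1))"
    using last_sq_norm_node_update_le[OF m n lc i] by (rule real_sqrt_le_mono)
  finally show ?thesis
    by (cases "i < m - 1") (simp_all add: real_sqrt_mult nshape_norm_nonneg tensor_norm_contraction_canonical)
qed

lemma cshape_norm_col_tensor_le:
  assumes k: "k < n - 1" and hD: "\<forall>i<m. hdim U i k \<le> D"
  shows "cshape_norm m n U k (col_tensor m n U k) \<le> real D powr (real m / 2)"
proof -
  have "real (card (rightC m n U k)) = (\<Prod>i<m. real (hdim U i k))"
    using k unfolding rightC_def by (simp add: card_PiE rdim_def less_diff_conv)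
  also have "\<dots> \<le> real D ^ m"
    using hD prod_mono[of "{..<m}" "\<lambda>i. real (hdim U i k)" "\<lambda>_. real D"] by simp
  finally have "sqrt ((cshape_norm m n U k (col_tensor m n U k))\<^sup>2) \<le> sqrt (real D ^ m)"
    unfolding cshape_norm_canonical[OF n cc k] by (rule real_sqrt_le_mono)
  then show ?thesis
    using m by (simp add: cshape_norm_nonneg powr_half_sqrt_powr powr_realpow')
qed

lemma nshape_norm_node_le:
  assumes i: "i < m - 1" and vD: "vdim U i (n - 1) \<le> D"
  shows "nshape_norm m n U i (n - 1) (node U i (n - 1)) \<le> sqrt (real D)"
proof -
  have "sqrt ((nshape_norm m n U i (n - 1) (node U i (n - 1)))\<^sup>2) \<le> sqrt (real D)"
    unfolding nshape_norm_canonical[OF m n lc i] using vD by simp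
  then show ?thesis
    by (simp add: nshape_norm_nonneg)
qed

lemma nshape_norm_corner:
  "nshape_norm m n U (m - 1) (n - 1) (node U (m - 1) (n - 1)) = tensor_norm m n U (contraction m n U)"
  by (simp add: tensor_norm_contraction_canonical last_sq_norm_last_nodes[OF m n lc] nshape_norm_nonneg)

end

section \<open>The bound for a canonical PEPS\<close>

lemma tensor_norm_pert_remainder_le:
  assumes n: "1 \<le> n" and e: "0 \<le> e1" "e1 \<le> 1" "0 \<le> e2" "e2 \<le> 1"
    and p: "is_pert m n U e1 e2 \<Delta> \<delta>"
  shows "tensor_norm m n U (\<lambda>x. pert_contraction m n U \<Delta> \<delta> x - contraction m n U x
      - (\<Sum>k<n - 1. first_order_col m n U \<Delta> k x) - (\<Sum>i<m. first_order_node m n U \<delta> i x))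
    \<le> sqrt (real (card (physIdx m n U))) * remainder_const m n U * (e1\<^sup>2 + e2\<^sup>2)"
proof -
  define e where "e = max e1 e2"
  have e': "0 \<le> e" "e \<le> 1" "e1 \<le> e" "e2 \<le> e"
    using e by (auto simp: e_def)
  have "tensor_norm m n U (\<lambda>x. pert_contraction m n U \<Delta> \<delta> x - contraction m n U x
      - (\<Sum>k<n - 1. first_order_col m n U \<Delta> k x) - (\<Sum>i<m. first_order_node m n U \<delta> i x))
      \<le> sqrt (real (card (physIdx m n U))) * (remainder_const m n U * e\<^sup>2)"
  proof (rule tensor_norm_le_const, rule abs_pert_contraction_remainder_le[OF n e'(1,2)])
    show "\<forall>j<n - 1. cshape_norm m n U j (\<Delta> j) \<le> e * cshape_norm m n U j (col_tensor m n U j)"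
      using p e'(3) unfolding is_pert_def by (meson cshape_norm_nonneg mult_right_mono order_trans)
    show "\<forall>i<m. nshape_norm m n U i (n - 1) (\<delta> i) \<le> e * nshape_norm m n U i (n - 1) (node U i (n - 1))"
      using p e'(4) unfolding is_pert_def by (meson nshape_norm_nonneg mult_right_mono order_trans)
  qed
  also have "\<dots> \<le> sqrt (real (card (physIdx m n U))) * remainder_const m n U * (e1\<^sup>2 + e2\<^sup>2)"
    using e remainder_const_nonneg[of m n U]
    by (simp add: e_def max_def mult.assoc mult_left_mono)
  finally show ?thesis .
qed

lemma L2_set_sum_le:
  assumes "finite K"
  shows "L2_set (\<lambda>x. \<Sum>k\<in>K. f k x) A \<le> (\<Sum>k\<in>K. L2_set (f k) A)"
  using assms
proof (induction K rule: finite_induct)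
  case (insert k K)
  then show ?case
    using L2_set_triangle_ineq[of "f k" "\<lambda>x. \<Sum>k\<in>K. f k x" A] by simp
qed (simp add: L2_set_def)

lemma tensor_norm_nonneg: "0 \<le> tensor_norm m n U f"
  by (simp add: tensor_norm_def sum_nonneg)

lemma tensor_norm_eq_L2_set: "tensor_norm m n U f = L2_set f (physIdx m n U)"
  by (simp add: tensor_norm_def L2_set_def)

context
  fixes m n D :: nat and U :: peps
  assumes m: "1 \<le> m" and n: "1 \<le> n" and cc: "col_canonical m n U" and lc: "last_canonical m n U"
    and hD: "\<forall>i<m. \<forall>j. j + 1 < n \<longrightarrow> hdim U i j \<le> D"
    and vD: "\<forall>i. i + 1 < m \<longrightarrow> vdim U i (n - 1) \<le> D"
begin

lemma tensor_norm_sum_first_order_col_le: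
  assumes "\<forall>j<n - 1. cshape_norm m n U j (\<Delta> j) \<le> e1 * cshape_norm m n U j (col_tensor m n U j)"
    and "0 \<le> e1"
  shows "tensor_norm m n U (\<lambda>x. \<Sum>k<n - 1. first_order_col m n U \<Delta> k x)
    \<le> e1 * (real (n - 1) * real D powr (real m / 2)) * tensor_norm m n U (contraction m n U)"
proof -
  let ?nC = "tensor_norm m n U (contraction m n U)"
  have "tensor_norm m n U (first_order_col m n U \<Delta> k) \<le> e1 * real D powr (real m / 2) * ?nC"
    if k: "k < n - 1" for k
  proof -
    have "tensor_norm m n U (first_order_col m n U \<Delta> k) \<le> cshape_norm m n U k (\<Delta> k) * ?nC"
      using tensor_norm_first_order_col_le[OF m n cc lc k] .
    also have "\<dots> \<le> (e1 * cshape_norm m n U k (col_tensor m n U k)) * ?nC"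
      using assms(1) k by (intro mult_right_mono) (auto simp: tensor_norm_nonneg)
    also have "\<dots> \<le> (e1 * real D powr (real m / 2)) * ?nC"
      using cshape_norm_col_tensor_le[OF m n cc lc k] hD k assms(2)
      by (intro mult_right_mono mult_left_mono) (auto simp: tensor_norm_nonneg less_diff_conv)
    finally show ?thesis .
  qed
  then have "(\<Sum>k<n - 1. tensor_norm m n U (first_order_col m n U \<Delta> k))
      \<le> (\<Sum>k<n - 1. e1 * real D powr (real m / 2) * ?nC)"
    by (intro sum_mono) simp
  then show ?thesis
    unfolding tensor_norm_eq_L2_set
    by (intro order_trans[OF L2_set_sum_le]) (simp_all add: mult_ac)
qed

lemma tensor_norm_sum_first_order_node_le:
  assumes "\<forall>i<m. nshape_norm m n U i (n - 1) (\<delta> i) \<le> e2 * nshape_norm m n U i (n - 1) (node U i (n - 1))"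
    and "0 \<le> e2"
  shows "tensor_norm m n U (\<lambda>x. \<Sum>i<m. first_order_node m n U \<delta> i x)
    \<le> e2 * (real (m - 1) * sqrt (real D) + 1) * tensor_norm m n U (contraction m n U)"
proof -
  let ?nC = "tensor_norm m n U (contraction m n U)"
  let ?c = "\<lambda>i. if i < m - 1 then sqrt (real D) else 1"
  have "tensor_norm m n U (first_order_node m n U \<delta> i) \<le> e2 * ?c i * ?nC" if i: "i < m" for i
  proof -
    have nC: "0 \<le> ?nC"
      by (rule tensor_norm_nonneg)
    have "tensor_norm m n U (first_order_node m n U \<delta> i)
        \<le> nshape_norm m n U i (n - 1) (\<delta> i) * (if i < m - 1 then ?nC else 1)"
      using tensor_norm_first_order_node_le[OF m n cc lc i] .
    also have "\<dots> \<le> (e2 * nshape_norm m n U i (n - 1) (node U i (n - 1))) * (if i < m - 1 then ?nC else 1)"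
      using assms(1) i nC by (intro mult_right_mono) auto
    also have "\<dots> \<le> e2 * ?c i * ?nC"
    proof (cases "i < m - 1")
      case True
      then show ?thesis
        using nshape_norm_node_le[OF m n cc lc True] vD nC assms(2)
        by (simp add: less_diff_conv mult.assoc mult_left_mono mult_right_mono)
    next
      case False
      then have "i = m - 1"
        using i by simp
      then show ?thesis
        using nshape_norm_corner[OF m n cc lc] by simp
    qed
    finally show ?thesis .
  qed
  then have "(\<Sum>i<m. tensor_norm m n U (first_order_node m n U \<delta> i)) \<le> (\<Sum>i<m. e2 * ?c i * ?nC)"
    by (intro sum_mono) simp
  also have "\<dots> = e2 * (real (m - 1) * sqrt (real D) + 1) * ?nC"
  proof -
    have "{..<m} = insert (m - 1) {..<m - 1}"
      using m by auto
    then show ?thesis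
      by (simp add: sum_distrib_left sum_distrib_right[symmetric] algebra_simps)
  qed
  finally show ?thesis
    unfolding tensor_norm_eq_L2_set by (intro order_trans[OF L2_set_sum_le]) simp_all
qed

lemma rel_err_canonical_le:
  assumes e: "0 \<le> e1" "e1 \<le> 1" "0 \<le> e2" "e2 \<le> 1"
    and p: "is_pert m n U e1 e2 \<Delta> \<delta>" and nz: "tensor_norm m n U (contraction m n U) \<noteq> 0"
  shows "rel_err m n U \<Delta> \<delta> \<le> e1 * (real (n - 1) * real D powr (real m / 2))
      + e2 * (real (m - 1) * sqrt (real D) + 1)
      + sqrt (real (card (physIdx m n U))) * remainder_const m n U / tensor_norm m n U (contraction m n U)
        * (e1\<^sup>2 + e2\<^sup>2)"
proof -
  let ?nC = "tensor_norm m n U (contraction m n U)"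
  let ?FC = "\<lambda>x. \<Sum>k<n - 1. first_order_col m n U \<Delta> k x"
  let ?FN = "\<lambda>x. \<Sum>i<m. first_order_node m n U \<delta> i x"
  let ?R = "\<lambda>x. pert_contraction m n U \<Delta> \<delta> x - contraction m n U x - ?FC x - ?FN x"
  let ?K = "sqrt (real (card (physIdx m n U))) * remainder_const m n U"
  have \<Delta>: "\<forall>j<n - 1. cshape_norm m n U j (\<Delta> j) \<le> e1 * cshape_norm m n U j (col_tensor m n U j)"
    and \<delta>: "\<forall>i<m. nshape_norm m n U i (n - 1) (\<delta> i) \<le> e2 * nshape_norm m n U i (n - 1) (node U i (n - 1))"
    using p by (simp_all add: is_pert_def)
  have R: "tensor_norm m n U ?R \<le> ?K * (e1\<^sup>2 + e2\<^sup>2)"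
    by (rule tensor_norm_pert_remainder_le[OF n e p])
  have "tensor_norm m n U (\<lambda>x. pert_contraction m n U \<Delta> \<delta> x - contraction m n U x)
      \<le> tensor_norm m n U ?FC + tensor_norm m n U ?FN + tensor_norm m n U ?R"
  proof -
    have split: "(\<lambda>x. pert_contraction m n U \<Delta> \<delta> x - contraction m n U x) = (\<lambda>x. ?FC x + (?FN x + ?R x))"
      by simp
    show ?thesis
      unfolding tensor_norm_eq_L2_set split
      using L2_set_triangle_ineq[of ?FC "\<lambda>x. ?FN x + ?R x" "physIdx m n U"]
        L2_set_triangle_ineq[of ?FN ?R "physIdx m n U"]
      by linarith
  qed
  also have "\<dots> \<le> (e1 * (real (n - 1) * real D powr (real m / 2))
        + e2 * (real (m - 1) * sqrt (real D) + 1)) * ?nC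
      + ?K * (e1\<^sup>2 + e2\<^sup>2)"
    using tensor_norm_sum_first_order_col_le[OF \<Delta> e(1)] tensor_norm_sum_first_order_node_le[OF \<delta> e(3)] R
    by (simp add: algebra_simps)
  finally have diff: "tensor_norm m n U (\<lambda>x. pert_contraction m n U \<Delta> \<delta> x - contraction m n U x)
      \<le> (e1 * (real (n - 1) * real D powr (real m / 2)) + e2 * (real (m - 1) * sqrt (real D) + 1)) * ?nC
        + ?K * (e1\<^sup>2 + e2\<^sup>2)" .
  have nC: "0 < ?nC"
    using nz tensor_norm_nonneg[of m n U "contraction m n U"] by linarith
  have "rel_err m n U \<Delta> \<delta>
      \<le> ((e1 * (real (n - 1) * real D powr (real m / 2)) + e2 * (real (m - 1) * sqrt (real D) + 1)) * ?nC
        + ?K * (e1\<^sup>2 + e2\<^sup>2)) / ?nC"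
    unfolding rel_err_def using diff nC by (intro divide_right_mono) auto
  also have "\<dots> = e1 * (real (n - 1) * real D powr (real m / 2)) + e2 * (real (m - 1) * sqrt (real D) + 1)
      + ?K / ?nC * (e1\<^sup>2 + e2\<^sup>2)"
    using nC by (simp add: add_divide_distrib)
  finally show ?thesis .
qed

lemma sup_err_canonical_le:
  assumes e: "0 \<le> e1" "e1 \<le> 1" "0 \<le> e2" "e2 \<le> 1"
    and nz: "tensor_norm m n U (contraction m n U) \<noteq> 0"
  shows "sup_err m n U e1 e2 \<le> e1 * (real (n - 1) * real D powr (real m / 2))
      + e2 * (real (m - 1) * sqrt (real D) + 1)
      + sqrt (real (card (physIdx m n U))) * remainder_const m n U / tensor_norm m n U (contraction m n U)
        * (e1\<^sup>2 + e2\<^sup>2)"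
  unfolding sup_err_def
proof (rule cSup_least)
  show "{rel_err m n U \<Delta> \<delta> |\<Delta> \<delta>. is_pert m n U e1 e2 \<Delta> \<delta>} \<noteq> {}"
    using is_pert_zero[OF e(1,3)] by blast
qed (use rel_err_canonical_le[OF e _ nz] in blast)

end

lemma tensor_norm_contraction_cong:
  assumes "\<forall>i<m. \<forall>j<n. phys C i j = phys T i j"
    and "\<forall>x\<in>physIdx m n T. contraction m n C x = contraction m n T x"
  shows "tensor_norm m n C (contraction m n C) = tensor_norm m n T (contraction m n T)"
proof -
  have "physIdx m n C = physIdx m n T"
    unfolding physIdx_def using assms(1) by (intro PiE_cong) auto
  then show ?thesis
    unfolding tensor_norm_def using assms(2) by (intro arg_cong[where f=sqrt] sum.cong) auto
qed

lemma le_divide_mult_upper: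
  fixes a b s :: real
  assumes "0 \<le> a" "0 < b" "b \<le> s"
  shows "a \<le> a / b * s"
proof -
  have "a = a / b * b"
    using assms(2) by simp
  also have "\<dots> \<le> a / b * s"
    using assms by (intro mult_left_mono) auto
  finally show ?thesis .
qed

theorem mainTheorem16:
  fixes m n D :: nat and T C :: peps
  assumes "1 \<le> m" and "1 \<le> n"
    and "tensor_norm m n T (contraction m n T) \<noteq> 0"
    and "\<forall>i<m. \<forall>j<n. phys C i j = phys T i j"
    and "\<forall>x\<in>physIdx m n T. contraction m n C x = contraction m n T x"
    and "col_canonical m n C" and "last_canonical m n C"
    and "\<forall>i<m. \<forall>j. j + 1 < n \<longrightarrow> hdim C i j \<le> D"
    and "\<forall>i. i + 1 < m \<longrightarrow> vdim C i (n - 1) \<le> D"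
  shows "\<exists>K e0. 0 < e0 \<and> (\<forall>\<epsilon>1 \<epsilon>2. 0 < \<epsilon>1 \<longrightarrow> 0 < \<epsilon>2 \<longrightarrow> \<epsilon>1 < e0 \<longrightarrow> \<epsilon>2 < e0 \<longrightarrow>
     sup_err m n C \<epsilon>1 \<epsilon>2
       \<le> (\<epsilon>1 * (1 + real (n - 1) * real D powr (real m / 2)) + \<epsilon>2 * (1 + real (m - 1) * sqrt (real D)))
          / (\<epsilon>1 * real (n - 1) + \<epsilon>2 * real m) * sup_err m n T \<epsilon>1 \<epsilon>2
         + K * (\<epsilon>1\<^sup>2 + \<epsilon>2\<^sup>2))"
proof -
  note m = assms(1) and n = assms(2) and nzT = assms(3) and canonical = assms(6-9)
  have nzC: "tensor_norm m n C (contraction m n C) \<noteq> 0"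
    using nzT tensor_norm_contraction_cong[OF assms(4,5)] by simp
  define K where "K = sqrt (real (card (physIdx m n C))) * remainder_const m n C
    / tensor_norm m n C (contraction m n C)"
  have "sup_err m n C e1 e2
      \<le> (e1 * (1 + real (n - 1) * real D powr (real m / 2)) + e2 * (1 + real (m - 1) * sqrt (real D)))
          / (e1 * real (n - 1) + e2 * real m) * sup_err m n T e1 e2 + K * (e1\<^sup>2 + e2\<^sup>2)"
    if e: "0 < e1" "0 < e2" "e1 < 1" "e2 < 1" for e1 e2
  proof -
    let ?num = "e1 * (1 + real (n - 1) * real D powr (real m / 2)) + e2 * (1 + real (m - 1) * sqrt (real D))"
    have "sup_err m n C e1 e2 \<le> ?num + K * (e1\<^sup>2 + e2\<^sup>2)"
      using sup_err_canonical_le[OF m n canonical, of e1 e2] e nzC unfolding K_def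
      by (simp add: algebra_simps)
    moreover have "?num \<le> ?num / (e1 * real (n - 1) + e2 * real m) * sup_err m n T e1 e2"
      using e m sup_err_ge[OF n nzT, of e1 e2]
      by (intro le_divide_mult_upper) (auto intro!: add_nonneg_nonneg add_nonneg_pos)
    ultimately show ?thesis
      by linarith
  qed
  then show ?thesis
    by (intro exI[of _ K] exI[of _ "1 :: real"]) auto
qed

end
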